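(* Let $F$ be a field of characteristic $0$. For $n=2$ and $n=3$, the algebra $T_n$ is generated by the odd power sums $p_{2k+1}$ ($k\ge 0$), and the proper products form a linear basis of $T_n$. Concretely: for $n=2$ the proper products are $p_1^{c}\,p_{2m+1}^{e}$ with $c\ge 0$, $e\in\{0,1\}$, $m\ge 1$; for $n=3$ they are $p_1^{c_1}p_3^{c_3}\,p_{2m+1}^{e}$ with $c_1,c_3\ge 0$, $e\in\{0,1\}$, $m\ge 2$.
   Context: $p_k=x_1^k+\dots+x_n^k$. A polynomial in $F[x_1,\dots,x_n]$ is monotypically supersymmetric if it is symmetric and, after substituting $x_1=t,\ x_2=-t$, the result does not depend on $t$; $T_n$ is the algebra of such polynomials. In general, with $i=\lfloor n/2\rfloor$, $j=\lfloor (n-1)/2\rfloor$, a proper product is $p_1^{c_1}p_3^{c_3}\cdots p_{2j+1}^{c_{2j+1}}p_{2m_1+1}\cdots p_{2m_{i'}+1}$ with $c$'s $\ge 0$, $i'\le i$, and all $m_k>j$. *)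

theory Defs
  imports "HOL-Library.Poly_Mapping" "HOL-Combinatorics.Permutations"
begin

text \<open>Multivariate polynomials over 'a: finitely supported maps from monomials
  (finitely supported exponent vectors) to coefficients.  Variable x_(i+1) is index i.\<close>

type_synonym 'a mpoly = "(nat \<Rightarrow>\<^sub>0 nat) \<Rightarrow>\<^sub>0 'a"

definition Var :: "nat \<Rightarrow> 'a::comm_ring_1 mpoly" where
  "Var i = Poly_Mapping.single (Poly_Mapping.single i 1) 1"

definition Const :: "'a::comm_ring_1 \<Rightarrow> 'a mpoly" where
  "Const c = Poly_Mapping.single 0 c"

definition in_vars :: "nat \<Rightarrow> 'a::comm_ring_1 mpoly \<Rightarrow> bool" where
  "in_vars n p \<longleftrightarrow> (\<forall>m\<in>Poly_Mapping.keys p. Poly_Mapping.keys m \<subseteq> {..<n})"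

definition psum :: "nat \<Rightarrow> nat \<Rightarrow> 'a::comm_ring_1 mpoly" where
  "psum n k = (\<Sum>i<n. Var i ^ k)"

definition symmetric_poly :: "nat \<Rightarrow> 'a::comm_ring_1 mpoly \<Rightarrow> bool" where
  "symmetric_poly n p \<longleftrightarrow>
     (\<forall>\<sigma>. \<sigma> permutes {..<n} \<longrightarrow>
        (\<forall>m. Poly_Mapping.lookup p (Poly_Mapping.map_key \<sigma> m) = Poly_Mapping.lookup p m))"

text \<open>substitution x_1 := t, x_2 := -t; the new variable t is stored in slot 0\<close>
definition subst_t :: "'a::comm_ring_1 mpoly \<Rightarrow> 'a mpoly" where
  "subst_t p = (\<Sum>m\<in>Poly_Mapping.keys p.
      Poly_Mapping.single
        (Poly_Mapping.update 0 (Poly_Mapping.lookup m 0 + Poly_Mapping.lookup m 1)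
          (Poly_Mapping.update 1 0 m))
        ((-1) ^ Poly_Mapping.lookup m 1 * Poly_Mapping.lookup p m))"

definition indep_t :: "'a::comm_ring_1 mpoly \<Rightarrow> bool" where
  "indep_t q \<longleftrightarrow> (\<forall>m\<in>Poly_Mapping.keys q. Poly_Mapping.lookup m 0 = 0)"

definition mono_supersym :: "nat \<Rightarrow> 'a::comm_ring_1 mpoly \<Rightarrow> bool" where
  "mono_supersym n p \<longleftrightarrow> symmetric_poly n p \<and> indep_t (subst_t p)"

definition T :: "nat \<Rightarrow> 'a::comm_ring_1 mpoly set" where
  "T n = {p. in_vars n p \<and> mono_supersym n p}"

inductive_set subalg :: "'a::comm_ring_1 mpoly set \<Rightarrow> 'a mpoly set" for G where
  const: "Const c \<in> subalg G"
| gen: "g \<in> G \<Longrightarrow> g \<in> subalg G"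
| add: "p \<in> subalg G \<Longrightarrow> q \<in> subalg G \<Longrightarrow> p + q \<in> subalg G"
| mult: "p \<in> subalg G \<Longrightarrow> q \<in> subalg G \<Longrightarrow> p * q \<in> subalg G"

definition is_basis :: "'i set \<Rightarrow> ('i \<Rightarrow> 'a::comm_ring_1 mpoly) \<Rightarrow> 'a mpoly set \<Rightarrow> bool" where
  "is_basis I b S \<longleftrightarrow> b ` I \<subseteq> S \<and>
     (\<forall>p\<in>S. \<exists>!a. (\<forall>i. i \<notin> I \<longrightarrow> a i = 0) \<and> finite {i. a i \<noteq> 0} \<and>
                p = (\<Sum>i\<in>{i. a i \<noteq> 0}. Const (a i) * b i))"

text \<open>proper products for n = 2: p_1^c (None), p_1^c p_(2m+1) with m \<ge> 1 (Some m)\<close>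
definition proper_idx2 :: "(nat \<times> nat option) set" where
  "proper_idx2 = {(c, e). case e of None \<Rightarrow> True | Some m \<Rightarrow> m \<ge> 1}"

definition proper2 :: "nat \<times> nat option \<Rightarrow> 'a::comm_ring_1 mpoly" where
  "proper2 = (\<lambda>(c, e). psum 2 1 ^ c *
      (case e of None \<Rightarrow> 1 | Some m \<Rightarrow> psum 2 (2*m+1)))"

text \<open>proper products for n = 3: p_1^c1 p_3^c3 (None), times p_(2m+1) with m \<ge> 2 (Some m)\<close>
definition proper_idx3 :: "(nat \<times> nat \<times> nat option) set" where
  "proper_idx3 = {(c1, c3, e). case e of None \<Rightarrow> True | Some m \<Rightarrow> m \<ge> 2}"

definition proper3 :: "nat \<times> nat \<times> nat option \<Rightarrow> 'a::comm_ring_1 mpoly" where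
  "proper3 = (\<lambda>(c1, c3, e). psum 3 1 ^ c1 * psum 3 3 ^ c3 *
      (case e of None \<Rightarrow> 1 | Some m \<Rightarrow> psum 3 (2*m+1)))"

end

theory Submission
  imports Defs "HOL-Library.Product_Lexorder" "HOL-Library.Product_Plus"
begin

text \<open>
  Over a field of characteristic 0 every symmetric polynomial in \<open>n \<le> 3\<close> variables is a unique
  polynomial \<open>G\<close> in the elementary symmetric polynomials.  Under \<open>x\<^sub>1 = t, x\<^sub>2 = -t\<close> they become
  \<open>e\<^sub>1 \<mapsto> 0, e\<^sub>2 \<mapsto> -t\<^sup>2\<close> for \<open>n = 2\<close>; for \<open>n = 3\<close> the generators \<open>e\<^sub>1, e\<^sub>2, e\<^sub>1e\<^sub>2 - e\<^sub>3\<close> become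
  \<open>x\<^sub>3, -t\<^sup>2, 0\<close>.  Distinct monomials of \<open>G\<close> that survive the substitution stay distinct, so for an
  element of \<open>T\<^sub>n\<close> every monomial of \<open>G\<close> containing the second generator also contains the first
  (\<open>n = 2\<close>) resp. the third (\<open>n = 3\<close>).  Written in the generators via Newton's identities, the
  proper products have leading monomials, for a weighted lexicographic order, that run bijectively
  through exactly these admissible monomials.  By triangularity the proper products form a basis of
  \<open>T\<^sub>n\<close>; as they are products of odd power sums, and the odd power sums lie in \<open>T\<^sub>n\<close> by a direct
  computation, \<open>T\<^sub>n\<close> is the subalgebra they generate.
\<close>

abbreviation lookup where "lookup \<equiv> Poly_Mapping.lookup"
abbreviation keys where "keys \<equiv> Poly_Mapping.keys"
abbreviation single where "single \<equiv> Poly_Mapping.single"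

section \<open>Polynomials, constants and substitution homomorphisms\<close>

lemma sum_single_lookup: "(\<Sum>k\<in>keys p. single k (lookup p k)) = p"
  by (rule poly_mapping_eqI) (auto simp: lookup_sum lookup_single when_def in_keys_iff)

lemma all_keys_add: "\<forall>m\<in>keys p. P m \<Longrightarrow> \<forall>m\<in>keys q. P m \<Longrightarrow> \<forall>m\<in>keys (p + q). P m"
  using keys_add[of p q] by blast

lemma all_keys_mult:
  assumes "\<forall>m\<in>keys p. P m" "\<forall>m\<in>keys q. Q m" "\<And>a b. P a \<Longrightarrow> Q b \<Longrightarrow> R (a + b)"
  shows "\<forall>m\<in>keys (p * q). R m"
  using keys_mult[of p q] assms by blast

lemma Const_0[simp]: "Const 0 = 0" by (simp add: Const_def)
lemma Const_1[simp]: "Const 1 = 1" by (simp add: Const_def)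
lemma Const_add: "Const (a + b) = Const a + Const b" by (simp add: Const_def single_add)
lemma Const_mult: "Const (a * b) = Const a * Const b" by (simp add: Const_def mult_single)
lemma Const_minus: "Const (- a) = - Const a" by (simp add: Const_def single_uminus)
lemma Const_diff: "Const (a - b) = Const a - Const b" by (simp add: Const_def single_diff)
lemma Const_mult_single: "Const c * single m a = single m (c * a)" by (simp add: Const_def mult_single)
lemma Const_power: "Const (a ^ k) = Const a ^ k"
  by (induction k) (auto simp: Const_mult)
lemma Const_of_nat: "Const (of_nat k) = of_nat k"
  by (induction k) (auto simp: Const_add)
lemma Const_numeral: "Const (numeral k) = numeral k"
  using Const_of_nat[of "numeral k"] by simp
lemma lookup_Const: "lookup (Const c) m = (if m = 0 then c else 0)"
  by (simp add: Const_def lookup_single when_def)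

lemma lookup_Const_mult: "lookup (Const c * p) m = c * lookup p m"
proof -
  have "Const c * p = (\<Sum>k\<in>keys p. single k (c * lookup p k))"
    by (subst (1) sum_single_lookup[symmetric, of p]) (simp add: sum_distrib_left Const_mult_single)
  then show ?thesis
    by (simp add: lookup_sum lookup_single when_def in_keys_iff)
qed

lemma Var_power: "(Var i :: 'a::comm_ring_1 mpoly) ^ k = single (single i k) 1"
  by (induction k) (auto simp: Var_def mult_single single_add[symmetric])

lemma Var_nonzero: "(Var i :: 'a::comm_ring_1 mpoly) \<noteq> 0"
  unfolding Var_def by (metis lookup_single_eq lookup_zero one_neq_zero)

lemma prod_single_one:
  "finite S \<Longrightarrow> (\<Prod>i\<in>S. single (g i) (1::'a::comm_ring_1)) = single (\<Sum>i\<in>S. g i) 1"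
  by (induction S rule: finite_induct) (auto simp: mult_single)

definition alg_hom :: "('a::comm_ring_1 mpoly \<Rightarrow> 'a mpoly) \<Rightarrow> bool" where
  "alg_hom h \<longleftrightarrow> (\<forall>p q. h (p + q) = h p + h q) \<and> (\<forall>p q. h (p * q) = h p * h q) \<and>
     (\<forall>c. h (Const c) = Const c)"

lemma alg_hom_add: "alg_hom h \<Longrightarrow> h (p + q) = h p + h q" by (simp add: alg_hom_def)
lemma alg_hom_mult: "alg_hom h \<Longrightarrow> h (p * q) = h p * h q" by (simp add: alg_hom_def)
lemma alg_hom_Const: "alg_hom h \<Longrightarrow> h (Const c) = Const c" by (simp add: alg_hom_def)
lemma alg_hom_1: "alg_hom h \<Longrightarrow> h 1 = 1" using alg_hom_Const[of h 1] by simp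
lemma alg_hom_0: "alg_hom h \<Longrightarrow> h 0 = 0" using alg_hom_Const[of h 0] by simp
lemma alg_hom_sum: "alg_hom h \<Longrightarrow> h (\<Sum>i\<in>S. f i) = (\<Sum>i\<in>S. h (f i))"
  by (induction S rule: infinite_finite_induct) (auto simp: alg_hom_add alg_hom_0)
lemma alg_hom_prod: "alg_hom h \<Longrightarrow> h (\<Prod>i\<in>S. f i) = (\<Prod>i\<in>S. h (f i))"
  by (induction S rule: infinite_finite_induct) (auto simp: alg_hom_mult alg_hom_1)
lemma alg_hom_power: "alg_hom h \<Longrightarrow> h (p ^ k) = h p ^ k"
  by (induction k) (auto simp: alg_hom_mult alg_hom_1)
lemma alg_hom_uminus: "alg_hom h \<Longrightarrow> h (- p) = - h p"
  using alg_hom_add[of h "-p" p] alg_hom_0[of h] by (simp add: eq_neg_iff_add_eq_0)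
lemma alg_hom_diff: "alg_hom h \<Longrightarrow> h (p - q) = h p - h q"
  using alg_hom_add[of h p "-q"] by (simp add: alg_hom_uminus)

definition lin_ext :: "((nat \<Rightarrow>\<^sub>0 nat) \<Rightarrow> 'a \<Rightarrow> 'a::comm_ring_1 mpoly) \<Rightarrow> 'a mpoly \<Rightarrow> 'a mpoly" where
  "lin_ext g p = (\<Sum>m\<in>keys p. g m (lookup p m))"

context
  fixes g :: "(nat \<Rightarrow>\<^sub>0 nat) \<Rightarrow> 'a \<Rightarrow> 'a::comm_ring_1 mpoly"
  assumes g_add: "\<And>m a b. g m (a + b) = g m a + g m b"
begin

private lemma g_zero: "g m 0 = 0"
  using g_add[of m 0 0] by simp

lemma lin_ext_superset: "finite S \<Longrightarrow> keys p \<subseteq> S \<Longrightarrow> lin_ext g p = (\<Sum>m\<in>S. g m (lookup p m))"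
  unfolding lin_ext_def by (rule sum.mono_neutral_left) (auto simp: in_keys_iff g_zero)

lemma lin_ext_add: "lin_ext g (p + q) = lin_ext g p + lin_ext g q"
proof -
  let ?S = "keys p \<union> keys q"
  have "lin_ext g (p + q) = (\<Sum>m\<in>?S. g m (lookup (p + q) m))"
    by (rule lin_ext_superset) (auto dest: keys_add[THEN subsetD])
  also have "\<dots> = lin_ext g p + lin_ext g q"
    by (simp add: lin_ext_superset[of ?S p] lin_ext_superset[of ?S q] lookup_add g_add sum.distrib)
  finally show ?thesis .
qed

lemma lin_ext_0: "lin_ext g 0 = 0"
  by (simp add: lin_ext_def)

lemma lin_ext_single: "lin_ext g (single m a) = g m a"
  by (cases "a = 0") (auto simp: lin_ext_def g_zero)

lemma alg_hom_lin_ext: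
  assumes mult: "\<And>m m' a b. g (m + m') (a * b) = g m a * g m' b"
    and const: "\<And>c. g 0 c = Const c"
  shows "alg_hom (lin_ext g)"
proof -
  have "lin_ext g (\<Sum>i\<in>S. f i) = (\<Sum>i\<in>S. lin_ext g (f i))" for S and f :: "'b \<Rightarrow> 'a mpoly"
    by (induction S rule: infinite_finite_induct) (simp_all add: lin_ext_add lin_ext_0)
  note lin_ext_sum = this
  have "lin_ext g (p * q) = lin_ext g p * lin_ext g q" for p q
  proof -
    have "p * q = (\<Sum>m\<in>keys p. \<Sum>n\<in>keys q. single (m + n) (lookup p m * lookup q n))"
      by (subst (1) sum_single_lookup[symmetric, of p], subst (1) sum_single_lookup[symmetric, of q])
         (simp add: sum_product mult_single)
    then have "lin_ext g (p * q) = (\<Sum>m\<in>keys p. \<Sum>n\<in>keys q. g m (lookup p m) * g n (lookup q n))"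
      by (simp add: lin_ext_sum lin_ext_single mult)
    also have "\<dots> = lin_ext g p * lin_ext g q"
      by (simp add: lin_ext_def sum_product)
    finally show ?thesis .
  qed
  then show ?thesis
    by (simp add: alg_hom_def lin_ext_add Const_def lin_ext_single const)
qed

end

definition subst_monom :: "(nat \<Rightarrow> 'a::comm_ring_1 mpoly) \<Rightarrow> (nat \<Rightarrow>\<^sub>0 nat) \<Rightarrow> 'a mpoly" where
  "subst_monom \<phi> m = (\<Prod>i\<in>keys m. \<phi> i ^ lookup m i)"

lemma subst_monom_superset:
  "finite S \<Longrightarrow> keys m \<subseteq> S \<Longrightarrow> subst_monom \<phi> m = (\<Prod>i\<in>S. \<phi> i ^ lookup m i)"
  unfolding subst_monom_def by (rule prod.mono_neutral_left) (auto simp: in_keys_iff)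

lemma subst_monom_add: "subst_monom \<phi> (m + m') = subst_monom \<phi> m * subst_monom \<phi> m'"
proof -
  let ?S = "keys m \<union> keys m'"
  have "subst_monom \<phi> (m + m') = (\<Prod>i\<in>?S. \<phi> i ^ lookup (m + m') i)"
    by (rule subst_monom_superset) (auto dest: keys_add[THEN subsetD])
  also have "\<dots> = (\<Prod>i\<in>?S. \<phi> i ^ lookup m i) * (\<Prod>i\<in>?S. \<phi> i ^ lookup m' i)"
    by (simp add: lookup_add power_add prod.distrib)
  also have "\<dots> = subst_monom \<phi> m * subst_monom \<phi> m'"
    by (simp add: subst_monom_superset[of ?S m] subst_monom_superset[of ?S m'])
  finally show ?thesis .
qed

lemma subst_monom_0[simp]: "subst_monom \<phi> 0 = 1"
  by (simp add: subst_monom_def)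

lemma subst_monom_Var: "subst_monom Var m = single m (1::'a::comm_ring_1)"
  unfolding subst_monom_def Var_power by (simp add: prod_single_one sum_single_lookup)

lemma subst_monom_cong: "(\<And>i. i \<in> keys m \<Longrightarrow> \<phi> i = \<psi> i) \<Longrightarrow> subst_monom \<phi> m = subst_monom \<psi> m"
  unfolding subst_monom_def by (rule prod.cong) auto

lemma subst_monom_3vars:
  "keys \<mu> \<subseteq> {..<3} \<Longrightarrow> subst_monom \<phi> \<mu> = \<phi> 0 ^ lookup \<mu> 0 * \<phi> 1 ^ lookup \<mu> 1 * \<phi> 2 ^ lookup \<mu> 2"
  by (simp add: subst_monom_superset[of "{..<3}"] numeral_3_eq_3 numeral_2_eq_2 lessThan_Suc mult_ac)

definition msubst :: "(nat \<Rightarrow> 'a::comm_ring_1 mpoly) \<Rightarrow> 'a mpoly \<Rightarrow> 'a mpoly" where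
  "msubst \<phi> = lin_ext (\<lambda>m a. Const a * subst_monom \<phi> m)"

lemma msubst_eq: "msubst \<phi> p = (\<Sum>m\<in>keys p. Const (lookup p m) * subst_monom \<phi> m)"
  by (simp add: msubst_def lin_ext_def)

lemma alg_hom_msubst: "alg_hom (msubst \<phi>)"
  unfolding msubst_def
  by (rule alg_hom_lin_ext) (simp_all add: Const_add Const_mult subst_monom_add algebra_simps)

lemmas msubst_add = alg_hom_add[OF alg_hom_msubst]
  and msubst_mult = alg_hom_mult[OF alg_hom_msubst]
  and msubst_Const[simp] = alg_hom_Const[OF alg_hom_msubst]
  and msubst_0[simp] = alg_hom_0[OF alg_hom_msubst]
  and msubst_diff = alg_hom_diff[OF alg_hom_msubst]
  and msubst_power = alg_hom_power[OF alg_hom_msubst]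

lemma msubst_single: "msubst \<phi> (single m a) = Const a * subst_monom \<phi> m"
  unfolding msubst_def by (rule lin_ext_single) (simp add: Const_add distrib_right)

lemma msubst_1[simp]: "msubst \<phi> 1 = 1"
  by (rule alg_hom_1[OF alg_hom_msubst])

lemma msubst_Var[simp]: "msubst \<phi> (Var i) = \<phi> i"
  by (simp add: Var_def msubst_single subst_monom_def)

lemma msubst_numeral[simp]: "msubst \<phi> (numeral k) = numeral k"
  using msubst_Const[of \<phi> "numeral k"] by (simp add: Const_numeral)

lemma msubst_Var_id: "msubst Var p = p"
  by (simp add: msubst_eq subst_monom_Var Const_mult_single sum_single_lookup)

lemma alg_hom_eq_msubst: "alg_hom h \<Longrightarrow> h p = msubst (\<lambda>i. h (Var i)) p"
proof -
  assume h: "alg_hom h"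
  have "h p = h (msubst Var p)" by (simp add: msubst_Var_id)
  also have "\<dots> = msubst (\<lambda>i. h (Var i)) p"
    unfolding msubst_eq
    by (simp add: h alg_hom_sum alg_hom_mult alg_hom_Const subst_monom_def alg_hom_prod alg_hom_power)
  finally show ?thesis .
qed

lemma alg_hom_msubst_comp: "alg_hom h \<Longrightarrow> h (msubst \<phi> p) = msubst (\<lambda>i. h (\<phi> i)) p"
proof -
  assume h: "alg_hom h"
  have "alg_hom (\<lambda>p. h (msubst \<phi> p))"
    unfolding alg_hom_def
    by (simp add: alg_hom_add[OF h] alg_hom_mult[OF h] alg_hom_Const[OF h] msubst_add msubst_mult)
  from alg_hom_eq_msubst[OF this] show ?thesis by simp
qed

lemma msubst_msubst: "msubst \<psi> (msubst \<phi> p) = msubst (\<lambda>i. msubst \<psi> (\<phi> i)) p"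
  by (rule alg_hom_msubst_comp[OF alg_hom_msubst])

lemma msubst_cong:
  "(\<And>m i. m \<in> keys p \<Longrightarrow> i \<in> keys m \<Longrightarrow> \<phi> i = \<psi> i) \<Longrightarrow> msubst \<phi> p = msubst \<psi> p"
  unfolding msubst_eq by (rule sum.cong) (auto intro!: arg_cong2[where f="(*)"] subst_monom_cong)

lemma msubst_cong_vars: "in_vars n p \<Longrightarrow> (\<And>i. i < n \<Longrightarrow> \<phi> i = \<psi> i) \<Longrightarrow> msubst \<phi> p = msubst \<psi> p"
  by (rule msubst_cong) (auto simp: in_vars_def)

section \<open>Variables, symmetry and the substitution \<open>x\<^sub>1 = t, x\<^sub>2 = -t\<close>\<close>

lemma in_vars_add: "in_vars n p \<Longrightarrow> in_vars n q \<Longrightarrow> in_vars n (p + q)"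
  unfolding in_vars_def by (rule all_keys_add)

lemma in_vars_mult: "in_vars n p \<Longrightarrow> in_vars n q \<Longrightarrow> in_vars n (p * q)"
  unfolding in_vars_def
  by (rule all_keys_mult, assumption, assumption) (auto dest: keys_add[THEN subsetD])

lemma in_vars_Const: "in_vars n (Const c)"
  by (simp add: in_vars_def Const_def)
lemma in_vars_0: "in_vars n 0" by (simp add: in_vars_def)
lemma in_vars_1: "in_vars n 1" using in_vars_Const[of n 1] by simp
lemma in_vars_Var: "i < n \<Longrightarrow> in_vars n (Var i)"
  by (simp add: in_vars_def Var_def)
lemma in_vars_diff: "in_vars n p \<Longrightarrow> in_vars n q \<Longrightarrow> in_vars n (p - q)"
  unfolding diff_conv_add_uminus by (intro in_vars_add) (simp_all add: in_vars_def)
lemma in_vars_power: "in_vars n p \<Longrightarrow> in_vars n (p ^ k)"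
  by (induction k) (auto simp: in_vars_1 in_vars_mult)
lemma in_vars_sum: "(\<And>i. i \<in> S \<Longrightarrow> in_vars n (f i)) \<Longrightarrow> in_vars n (\<Sum>i\<in>S. f i)"
  by (induction S rule: infinite_finite_induct) (auto simp: in_vars_0 in_vars_add)
lemma in_vars_prod: "(\<And>i. i \<in> S \<Longrightarrow> in_vars n (f i)) \<Longrightarrow> in_vars n (\<Prod>i\<in>S. f i)"
  by (induction S rule: infinite_finite_induct) (auto simp: in_vars_1 in_vars_mult)
lemma in_vars_mono: "in_vars n p \<Longrightarrow> n \<le> k \<Longrightarrow> in_vars k p"
  unfolding in_vars_def by (meson lessThan_subset_iff order_trans)
lemma in_vars_lookup_eq_0: "in_vars n p \<Longrightarrow> \<mu> \<in> keys p \<Longrightarrow> n \<le> i \<Longrightarrow> lookup \<mu> i = 0"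
  unfolding in_vars_def by (metis in_keys_iff lessThan_iff not_le subsetD)

lemma in_vars_msubst:
  assumes "in_vars k p" "\<And>i. i < k \<Longrightarrow> in_vars n (\<phi> i)"
  shows "in_vars n (msubst \<phi> p)"
proof -
  have "in_vars n (subst_monom \<phi> m)" if "m \<in> keys p" for m
    unfolding subst_monom_def
    using assms(1) that by (intro in_vars_prod in_vars_power assms(2)) (auto simp: in_vars_def)
  then show ?thesis
    unfolding msubst_eq by (intro in_vars_sum in_vars_mult in_vars_Const)
qed

lemma in_vars_psum: "in_vars n (psum n k)"
  unfolding psum_def by (auto intro!: in_vars_sum in_vars_power in_vars_Var)

lemma psum2: "psum 2 k = Var 0 ^ k + Var 1 ^ k"
  by (simp add: psum_def numeral_2_eq_2 lessThan_Suc)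
lemma psum3: "psum 3 k = Var 0 ^ k + Var 1 ^ k + Var 2 ^ k"
  by (simp add: psum_def numeral_3_eq_3 numeral_2_eq_2 lessThan_Suc)

definition subst_t_monom :: "(nat \<Rightarrow>\<^sub>0 nat) \<Rightarrow> (nat \<Rightarrow>\<^sub>0 nat)" where
  "subst_t_monom m = Poly_Mapping.update 0 (lookup m 0 + lookup m 1) (Poly_Mapping.update 1 0 m)"

lemma lookup_subst_t_monom:
  "lookup (subst_t_monom m) i =
    (if i = 0 then lookup m 0 + lookup m 1 else if i = 1 then 0 else lookup m i)"
  by (simp add: subst_t_monom_def lookup_update)

lemma subst_t_eq_lin_ext:
  "subst_t = lin_ext (\<lambda>m a. single (subst_t_monom m) ((-1) ^ lookup m 1 * a))"
  by (simp add: fun_eq_iff subst_t_def lin_ext_def subst_t_monom_def)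

lemma subst_t_single: "subst_t (single m a) = single (subst_t_monom m) ((-1) ^ lookup m 1 * a)"
  unfolding subst_t_eq_lin_ext by (rule lin_ext_single) (simp only: distrib_left single_add)

lemma alg_hom_subst_t: "alg_hom subst_t"
proof -
  have add: "subst_t_monom (m + m') = subst_t_monom m + subst_t_monom m'" for m m'
    by (rule poly_mapping_eqI) (simp add: lookup_subst_t_monom lookup_add)
  have zero: "subst_t_monom 0 = 0"
    by (rule poly_mapping_eqI) (simp add: lookup_subst_t_monom)
  show ?thesis
    unfolding subst_t_eq_lin_ext
  proof (rule alg_hom_lin_ext)
    show "single (subst_t_monom m) ((-1) ^ lookup m 1 * (a + b)) =
        single (subst_t_monom m) ((-1) ^ lookup m 1 * a) + single (subst_t_monom m) ((-1) ^ lookup m 1 * b)"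
      for m and a b :: 'a
      by (simp only: distrib_left single_add)
    show "single (subst_t_monom (m + m')) ((-1) ^ lookup (m + m') 1 * (a * b)) =
        single (subst_t_monom m) ((-1) ^ lookup m 1 * a) *
        single (subst_t_monom m') ((-1) ^ lookup m' 1 * b)"
      for m m' and a b :: 'a
      by (simp add: mult_single add lookup_add power_add ac_simps)
    show "single (subst_t_monom 0) ((-1) ^ lookup 0 1 * c) = Const c" for c :: 'a
      by (simp add: zero Const_def)
  qed
qed

lemma subst_t_Var:
  "subst_t (Var i) = (if i = 1 then - Var 0 else Var i)"
proof -
  have "subst_t_monom (single i 1) = single (if i = 1 then 0 else i) 1"
    by (rule poly_mapping_eqI) (auto simp: lookup_subst_t_monom lookup_single when_def)
  then show ?thesis by (simp add: Var_def subst_t_single lookup_single single_uminus when_def)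
qed

definition permute_vars :: "(nat \<Rightarrow> nat) \<Rightarrow> 'a::comm_ring_1 mpoly \<Rightarrow> 'a mpoly" where
  "permute_vars \<sigma> = lin_ext (\<lambda>m a. single (Poly_Mapping.map_key (inv \<sigma>) m) a)"

lemma permute_vars_single: "permute_vars \<sigma> (single m a) = single (Poly_Mapping.map_key (inv \<sigma>) m) a"
  unfolding permute_vars_def by (rule lin_ext_single) (simp add: single_add)

lemma alg_hom_permute_vars: "bij \<sigma> \<Longrightarrow> alg_hom (permute_vars \<sigma>)"
  unfolding permute_vars_def
  by (intro alg_hom_lin_ext)
     (simp_all add: single_add mult_single Const_def map_key_plus map_key_zero bij_is_inj bij_imp_bij_inv)

lemma permute_vars_Var: "bij \<sigma> \<Longrightarrow> permute_vars \<sigma> (Var i) = Var (\<sigma> i)"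
proof -
  assume b: "bij \<sigma>"
  then have "inj (inv \<sigma>)" by (simp add: bij_imp_bij_inv bij_is_inj)
  then have "Poly_Mapping.map_key (inv \<sigma>) (single i 1) = single (\<sigma> i) (1::nat)"
    using map_key_single[of "inv \<sigma>" "\<sigma> i" "1::nat"] by (simp add: inv_f_f[OF bij_is_inj[OF b]])
  then show ?thesis unfolding Var_def permute_vars_single by (metis One_nat_def)
qed

lemma lookup_permute_vars: "bij \<sigma> \<Longrightarrow> lookup (permute_vars \<sigma> p) m = lookup p (Poly_Mapping.map_key \<sigma> m)"
proof -
  assume b: "bij \<sigma>"
  then have ii: "inj (inv \<sigma>)" and i: "inj \<sigma>" by (simp_all add: bij_imp_bij_inv bij_is_inj)
  have eq: "Poly_Mapping.map_key (inv \<sigma>) m' = m \<longleftrightarrow> m' = Poly_Mapping.map_key \<sigma> m" for m'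
  proof -
    have "Poly_Mapping.map_key (inv \<sigma>) m' = m \<longleftrightarrow> (\<forall>j. lookup m' (inv \<sigma> j) = lookup m j)"
      by (simp add: poly_mapping_eq_iff map_key.rep_eq[OF ii] fun_eq_iff)
    also have "\<dots> \<longleftrightarrow> (\<forall>j. lookup m' j = lookup m (\<sigma> j))"
      by (metis b bij_inv_eq_iff)
    also have "\<dots> \<longleftrightarrow> m' = Poly_Mapping.map_key \<sigma> m"
      by (simp add: poly_mapping_eq_iff map_key.rep_eq[OF i] fun_eq_iff)
    finally show ?thesis .
  qed
  show ?thesis
    unfolding permute_vars_def lin_ext_def lookup_sum
    by (auto simp: lookup_single when_def eq in_keys_iff)
qed

lemma symmetric_poly_iff_permute_vars:
  "symmetric_poly n p \<longleftrightarrow> (\<forall>\<sigma>. \<sigma> permutes {..<n} \<longrightarrow> permute_vars \<sigma> p = p)"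
  unfolding symmetric_poly_def
  by (auto simp: poly_mapping_eq_iff lookup_permute_vars permutes_bij fun_eq_iff)

lemma symmetric_poly_add: "symmetric_poly n p \<Longrightarrow> symmetric_poly n q \<Longrightarrow> symmetric_poly n (p + q)"
  by (simp add: symmetric_poly_def lookup_add)
lemma symmetric_poly_diff: "symmetric_poly n p \<Longrightarrow> symmetric_poly n q \<Longrightarrow> symmetric_poly n (p - q)"
  by (simp add: symmetric_poly_def lookup_minus)
lemma symmetric_poly_mult: "symmetric_poly n p \<Longrightarrow> symmetric_poly n q \<Longrightarrow> symmetric_poly n (p * q)"
  by (simp add: symmetric_poly_iff_permute_vars alg_hom_mult[OF alg_hom_permute_vars] permutes_bij)
lemma symmetric_poly_Const: "symmetric_poly n (Const c)"
  by (simp add: symmetric_poly_iff_permute_vars alg_hom_Const[OF alg_hom_permute_vars] permutes_bij)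
lemma symmetric_poly_power: "symmetric_poly n p \<Longrightarrow> symmetric_poly n (p ^ k)"
  by (induction k) (auto intro: symmetric_poly_mult symmetric_poly_Const[of n 1, simplified])

lemma symmetric_poly_psum: "symmetric_poly n (psum n k)"
  unfolding symmetric_poly_iff_permute_vars
proof (intro allI impI)
  fix \<sigma> assume s: "\<sigma> permutes {..<n}"
  have b: "bij \<sigma>" using s by (rule permutes_bij)
  note h = alg_hom_permute_vars[OF b]
  have "permute_vars \<sigma> (psum n k) = (\<Sum>i<n. Var (\<sigma> i) ^ k)"
    by (simp add: psum_def alg_hom_sum[OF h] alg_hom_power[OF h] permute_vars_Var[OF b])
  also have "\<dots> = psum n k"
    unfolding psum_def using sum.permute[OF s, of "\<lambda>i. Var i ^ k"] unfolding comp_def by (rule sym)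
  finally show "permute_vars \<sigma> (psum n k) = psum n k" .
qed

lemma symmetric_poly_msubst: "(\<And>i. symmetric_poly n (\<phi> i)) \<Longrightarrow> symmetric_poly n (msubst \<phi> G)"
  by (simp add: symmetric_poly_iff_permute_vars alg_hom_msubst_comp alg_hom_permute_vars permutes_bij)

lemma indep_t_add: "indep_t p \<Longrightarrow> indep_t q \<Longrightarrow> indep_t (p + q)"
  unfolding indep_t_def by (rule all_keys_add)

lemma indep_t_mult: "indep_t p \<Longrightarrow> indep_t q \<Longrightarrow> indep_t (p * q)"
  unfolding indep_t_def by (rule all_keys_mult, assumption, assumption) (simp add: lookup_add)

lemma indep_t_Const: "indep_t (Const c)"
  by (simp add: indep_t_def Const_def)

lemma T_add: "p \<in> T n \<Longrightarrow> q \<in> T n \<Longrightarrow> p + q \<in> T n"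
  by (simp add: T_def mono_supersym_def in_vars_add symmetric_poly_add alg_hom_add[OF alg_hom_subst_t]
      indep_t_add)
lemma T_mult: "p \<in> T n \<Longrightarrow> q \<in> T n \<Longrightarrow> p * q \<in> T n"
  by (simp add: T_def mono_supersym_def in_vars_mult symmetric_poly_mult alg_hom_mult[OF alg_hom_subst_t]
      indep_t_mult)
lemma T_Const: "Const c \<in> T n"
  by (simp add: T_def mono_supersym_def in_vars_Const symmetric_poly_Const alg_hom_Const[OF alg_hom_subst_t]
      indep_t_Const)

lemma psum_odd_in_T:
  assumes "n \<in> {2, 3}"
  shows "psum n (2 * k + 1) \<in> T n"
proof -
  note h = alg_hom_subst_t
  have Var: "subst_t (Var 0) = Var 0" "subst_t (Var 1) = - Var 0" "subst_t (Var 2) = Var 2"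
    by (simp_all add: subst_t_Var)
  have odd: "Var 0 ^ (2 * k + 1) + (- Var 0) ^ (2 * k + 1) = (0 :: 'a mpoly)"
    by (simp add: power_minus_odd)
  have "subst_t (psum 2 (2 * k + 1) :: 'a mpoly) = 0"
    by (simp only: psum2 alg_hom_add[OF h] alg_hom_power[OF h] Var odd)
  moreover have "subst_t (psum 3 (2 * k + 1) :: 'a mpoly) = single (single 2 (2 * k + 1)) 1"
    unfolding Var_power[symmetric] by (simp only: psum3 alg_hom_add[OF h] alg_hom_power[OF h] Var odd add_0)
  ultimately have "indep_t (subst_t (psum n (2 * k + 1) :: 'a mpoly))"
    using assms by (auto simp: indep_t_def lookup_single)
  then show ?thesis
    by (simp add: T_def mono_supersym_def in_vars_psum symmetric_poly_psum)
qed

lemma subalg_odd_psums_in_T: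
  "p \<in> subalg (range (\<lambda>k. psum n (2 * k + 1))) \<Longrightarrow> n \<in> {2, 3} \<Longrightarrow> (p :: 'a::comm_ring_1 mpoly) \<in> T n"
  by (induction p rule: subalg.induct) (auto simp: T_add T_mult T_Const intro: psum_odd_in_T[simplified])

lemma subalg_sum: "(\<And>i. i \<in> S \<Longrightarrow> f i \<in> subalg G) \<Longrightarrow> (\<Sum>i\<in>S. f i) \<in> subalg G"
  by (induction S rule: infinite_finite_induct) (auto intro: subalg.add subalg.const[of 0, simplified])

lemma subalg_power: "p \<in> subalg G \<Longrightarrow> p ^ k \<in> subalg G"
  by (induction k) (auto intro: subalg.mult subalg.const[of 1, simplified])

section \<open>Symmetric polynomials in two and three variables\<close>

definition zero_var :: "nat \<Rightarrow> nat \<Rightarrow> 'a::comm_ring_1 mpoly" where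
  "zero_var j i = (if i = j then 0 else Var i)"

lemma subst_monom_zero_var: "subst_monom (zero_var j) \<mu> = (if lookup \<mu> j = 0 then single \<mu> 1 else 0)"
proof (cases "lookup \<mu> j = 0")
  case True
  then have "subst_monom (zero_var j) \<mu> = subst_monom Var \<mu>"
    by (intro subst_monom_cong) (auto simp: zero_var_def in_keys_iff)
  then show ?thesis using True by (simp add: subst_monom_Var)
next
  case False
  then have j: "j \<in> keys \<mu>" by (simp add: in_keys_iff)
  have "subst_monom (zero_var j) \<mu> = 0" unfolding subst_monom_def
    by (rule prod_zero) (use j False in \<open>auto intro!: bexI[of _ j] simp: zero_var_def power_0_left\<close>)
  then show ?thesis using False by simp
qed

lemma lookup_msubst_zero_var:
  "lookup (msubst (zero_var j) p) m = (if lookup m j = 0 then lookup p m else 0)"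
proof -
  have "msubst (zero_var j) p = (\<Sum>\<mu>\<in>keys p. single \<mu> (if lookup \<mu> j = 0 then lookup p \<mu> else 0))"
    unfolding msubst_eq by (rule sum.cong) (auto simp: subst_monom_zero_var Const_mult_single)
  then have "lookup (msubst (zero_var j) p) m =
      (\<Sum>\<mu>\<in>keys p. if \<mu> = m then (if lookup \<mu> j = 0 then lookup p \<mu> else 0) else 0)"
    by (simp add: lookup_sum lookup_single when_def)
  also have "\<dots> = (if lookup m j = 0 then lookup p m else 0)"
    by (simp add: in_keys_iff)
  finally show ?thesis .
qed

lemma msubst_zero_var_eq_0_iff: "msubst (zero_var j) G = 0 \<longleftrightarrow> (\<forall>m\<in>keys G. lookup m j \<noteq> 0)"
proof -
  have "lookup (msubst (zero_var j) G) m = 0 \<longleftrightarrow> (lookup m j = 0 \<longrightarrow> m \<notin> keys G)" for m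
    by (simp add: lookup_msubst_zero_var in_keys_iff)
  then show ?thesis unfolding poly_mapping_eq_iff fun_eq_iff lookup_zero by blast
qed

lemma keys_msubst_zero_var: "\<mu> \<in> keys (msubst (zero_var j) f) \<Longrightarrow> \<mu> \<in> keys f \<and> lookup \<mu> j = 0"
  by (auto simp: in_keys_iff lookup_msubst_zero_var split: if_splits)

lemma in_vars_msubst_zero_var: "in_vars (Suc j) f \<Longrightarrow> in_vars j (msubst (zero_var j) f)"
  unfolding in_vars_def
proof (intro ballI subsetI)
  fix \<mu> i assume f: "\<forall>m\<in>keys f. keys m \<subseteq> {..<Suc j}"
    and mu: "\<mu> \<in> keys (msubst (zero_var j) f)" and i: "i \<in> keys \<mu>"
  from keys_msubst_zero_var[OF mu] have "\<mu> \<in> keys f" "lookup \<mu> j = 0" by auto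
  with f i have "i < Suc j" by blast
  moreover have "i \<noteq> j" using i \<open>lookup \<mu> j = 0\<close> by (auto simp: in_keys_iff)
  ultimately show "i \<in> {..<j}" by simp
qed

definition var_deg_le :: "nat \<Rightarrow> 'a::comm_ring_1 mpoly \<Rightarrow> bool" where
  "var_deg_le k p \<longleftrightarrow> (\<forall>m\<in>keys p. \<forall>i. lookup m i \<le> k)"

lemma var_deg_le_add: "var_deg_le k p \<Longrightarrow> var_deg_le k q \<Longrightarrow> var_deg_le k (p + q)"
  unfolding var_deg_le_def by (rule all_keys_add)

lemma var_deg_le_diff: "var_deg_le k p \<Longrightarrow> var_deg_le k q \<Longrightarrow> var_deg_le k (p - q)"
  unfolding diff_conv_add_uminus by (intro var_deg_le_add) (simp_all add: var_deg_le_def)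

lemma var_deg_le_mult: "var_deg_le k p \<Longrightarrow> var_deg_le l q \<Longrightarrow> var_deg_le (k + l) (p * q)"
  unfolding var_deg_le_def by (rule all_keys_mult, assumption, assumption) (simp add: lookup_add add_mono)

lemma var_deg_le_Const: "var_deg_le 0 (Const c)" by (simp add: var_deg_le_def Const_def)
lemma var_deg_le_0: "var_deg_le k 0" by (simp add: var_deg_le_def)
lemma var_deg_le_mono: "var_deg_le k p \<Longrightarrow> k \<le> l \<Longrightarrow> var_deg_le l p"
  unfolding var_deg_le_def using le_trans by blast
lemma var_deg_le_power: "var_deg_le k p \<Longrightarrow> var_deg_le (k * e) (p ^ e)"
proof (induction e)
  case 0 then show ?case using var_deg_le_Const[of 1] by simp
next
  case (Suc e) then show ?case using var_deg_le_mult[of k p "k*e" "p^e"] by (simp add: add.commute)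
qed
lemma var_deg_le_sum: "(\<And>i. i \<in> S \<Longrightarrow> var_deg_le k (f i)) \<Longrightarrow> var_deg_le k (\<Sum>i\<in>S. f i)"
  by (induction S rule: infinite_finite_induct) (auto simp: var_deg_le_0 var_deg_le_add)

lemma var_deg_le_msubst_zero_var: "var_deg_le k f \<Longrightarrow> var_deg_le k (msubst (zero_var j) f)"
  unfolding var_deg_le_def using keys_msubst_zero_var by blast

lemma ex_var_deg_le: "\<exists>k. var_deg_le k (f :: 'a::comm_ring_1 mpoly)"
proof -
  let ?k = "\<Sum>m\<in>keys f. \<Sum>i\<in>keys m. lookup m i"
  have "var_deg_le ?k f" unfolding var_deg_le_def
  proof (intro ballI allI)
    fix m i assume m: "m \<in> keys f"
    have "lookup m i \<le> (\<Sum>i\<in>keys m. lookup m i)"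
      by (cases "i \<in> keys m") (auto intro: member_le_sum simp: in_keys_iff)
    also have "\<dots> \<le> ?k" using m by (intro member_le_sum) auto
    finally show "lookup m i \<le> ?k" .
  qed
  then show ?thesis by blast
qed

definition total_deg_le :: "nat \<Rightarrow> 'a::comm_ring_1 mpoly \<Rightarrow> bool" where
  "total_deg_le k G \<longleftrightarrow> (\<forall>\<mu>\<in>keys G. lookup \<mu> 0 + lookup \<mu> 1 + lookup \<mu> 2 \<le> k)"

lemma total_deg_le_add: "total_deg_le k p \<Longrightarrow> total_deg_le k q \<Longrightarrow> total_deg_le k (p + q)"
  unfolding total_deg_le_def by (rule all_keys_add)

lemma total_deg_le_Var_mult: "total_deg_le k p \<Longrightarrow> i < 3 \<Longrightarrow> total_deg_le (Suc k) (Var i * p)"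
  unfolding total_deg_le_def Var_def
  by (rule all_keys_mult[of _ "\<lambda>m. m = single i 1"]) (auto simp: lookup_add lookup_single when_def)

lemma var_deg_le_msubst3:
  assumes G: "in_vars 3 G" "total_deg_le k G" and ph: "\<And>i. i < 3 \<Longrightarrow> var_deg_le 1 (\<phi> i)"
  shows "var_deg_le k (msubst \<phi> G)"
  unfolding msubst_eq
proof (rule var_deg_le_sum)
  fix \<mu> assume mu: "\<mu> \<in> keys G"
  then have k: "keys \<mu> \<subseteq> {..<3}" using G by (auto simp: in_vars_def)
  have "var_deg_le (0 + (1 * lookup \<mu> 0 + 1 * lookup \<mu> 1 + 1 * lookup \<mu> 2))
      (Const (lookup G \<mu>) * (\<phi> 0 ^ lookup \<mu> 0 * \<phi> 1 ^ lookup \<mu> 1 * \<phi> 2 ^ lookup \<mu> 2))"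
    by (intro var_deg_le_mult var_deg_le_Const var_deg_le_power ph) auto
  then show "var_deg_le k (Const (lookup G \<mu>) * subst_monom \<phi> \<mu>)"
    using G mu by (auto simp: subst_monom_3vars[OF k] total_deg_le_def elim!: var_deg_le_mono)
qed

definition all_ones :: "nat \<Rightarrow> (nat \<Rightarrow>\<^sub>0 nat)" where "all_ones n = (\<Sum>i<n. single i 1)"

lemma lookup_all_ones: "lookup (all_ones n) j = (if j < n then 1 else 0)"
  by (simp add: all_ones_def lookup_sum lookup_single when_def)

lemma monom_quotient:
  fixes h :: "'a::comm_ring_1 mpoly" and \<mu> :: "nat \<Rightarrow>\<^sub>0 nat"
  assumes ge: "\<And>m i. m \<in> keys h \<Longrightarrow> lookup \<mu> i \<le> lookup m i"
  shows "\<exists>h1. h = single \<mu> 1 * h1 \<and> (\<forall>\<nu>. lookup h1 \<nu> = lookup h (\<nu> + \<mu>))"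
proof -
  define h1 where "h1 = (\<Sum>m\<in>keys h. single (m - \<mu>) (lookup h m))"
  have add: "\<mu> + (m - \<mu>) = m" if "m \<in> keys h" for m
    by (rule poly_mapping_eqI) (use ge[OF that] in \<open>simp add: lookup_add lookup_minus\<close>)
  have "single \<mu> 1 * h1 = (\<Sum>m\<in>keys h. single m (lookup h m))"
    unfolding h1_def sum_distrib_left by (rule sum.cong) (simp_all add: mult_single add)
  then have 1: "h = single \<mu> 1 * h1" by (simp add: sum_single_lookup)
  have eqv: "m - \<mu> = \<nu> \<longleftrightarrow> m = \<nu> + \<mu>" if "m \<in> keys h" for m \<nu>
    using add[OF that] by (metis add.commute add_diff_cancel_left')
  have "lookup h1 \<nu> = lookup h (\<nu> + \<mu>)" for \<nu>
  proof -
    have "lookup h1 \<nu> = (\<Sum>m\<in>keys h. if m = \<nu> + \<mu> then lookup h m else 0)"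
      unfolding h1_def lookup_sum by (rule sum.cong) (auto simp: lookup_single when_def eqv)
    also have "\<dots> = lookup h (\<nu> + \<mu>)" by (simp add: in_keys_iff)
    finally show ?thesis .
  qed
  with 1 show ?thesis by blast
qed

lemma in_vars_quotient:
  assumes "in_vars n G" "\<And>\<nu>. lookup G1 \<nu> = lookup G (\<nu> + \<mu>)"
  shows "in_vars n G1"
  unfolding in_vars_def
proof (intro ballI subsetI)
  fix \<nu> i assume "\<nu> \<in> keys G1" "i \<in> keys \<nu>"
  then have "\<nu> + \<mu> \<in> keys G" "i \<in> keys (\<nu> + \<mu>)" using assms(2) by (auto simp: in_keys_iff lookup_add)
  then show "i \<in> {..<n}" using assms(1) by (auto simp: in_vars_def)
qed

lemma map_key_all_ones: "\<sigma> permutes {..<n} \<Longrightarrow> Poly_Mapping.map_key \<sigma> (all_ones n) = all_ones n"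
  by (rule poly_mapping_eqI)
     (simp add: map_key.rep_eq[OF permutes_inj] lookup_all_ones
        permutes_in_image[of \<sigma> "{..<n}", simplified])

lemma symmetric_poly_monom_quotient:
  assumes "symmetric_poly n h" "\<And>\<nu>. lookup h1 \<nu> = lookup h (\<nu> + all_ones n)"
  shows "symmetric_poly n h1"
  unfolding symmetric_poly_def
proof (intro allI impI)
  fix \<sigma> m assume s: "\<sigma> permutes {..<n}"
  have "Poly_Mapping.map_key \<sigma> m + all_ones n = Poly_Mapping.map_key \<sigma> (m + all_ones n)"
    by (simp add: map_key_plus[OF permutes_inj[OF s]] map_key_all_ones[OF s])
  then show "lookup h1 (Poly_Mapping.map_key \<sigma> m) = lookup h1 m"
    using assms s by (simp add: symmetric_poly_def)
qed

lemma symmetric_poly_keys_lookup_nonzero: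
  assumes "symmetric_poly n h" "j < n" "i < n" "m \<in> keys h" "\<And>m. m \<in> keys h \<Longrightarrow> lookup m j \<noteq> 0"
  shows "lookup m i \<noteq> 0"
proof -
  let ?t = "Transposition.transpose i j"
  have t: "?t permutes {..<n}" using assms by (intro permutes_swap_id) auto
  have "lookup h (Poly_Mapping.map_key ?t m) = lookup h m"
    using assms(1) t by (simp add: symmetric_poly_def)
  then have "Poly_Mapping.map_key ?t m \<in> keys h" using assms(4) by (simp add: in_keys_iff)
  then have "lookup (Poly_Mapping.map_key ?t m) j \<noteq> 0" by (rule assms(5))
  then show ?thesis by (simp add: map_key.rep_eq[OF permutes_inj[OF t]])
qed

lemma symmetric_poly_0: "symmetric_poly n 0" by (simp add: symmetric_poly_def)

declare One_nat_def[simp del]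

lemma var_deg_le_all_ones_quotient:
  assumes "in_vars n h" "var_deg_le k h" "\<And>\<nu>. lookup h1 \<nu> = lookup h (\<nu> + all_ones n)"
  shows "var_deg_le (k - 1) h1"
  unfolding var_deg_le_def
proof (intro ballI allI)
  fix \<nu> i assume "\<nu> \<in> keys h1"
  then have \<nu>: "\<nu> + all_ones n \<in> keys h" using assms(3) by (simp add: in_keys_iff)
  have "lookup (\<nu> + all_ones n) i \<le> k" using assms(2) \<nu> by (simp add: var_deg_le_def)
  moreover have "\<not> i < n \<Longrightarrow> lookup (\<nu> + all_ones n) i = 0" using in_vars_lookup_eq_0[OF assms(1) \<nu>] by simp
  ultimately show "lookup \<nu> i \<le> k - 1" by (auto simp: lookup_add lookup_all_ones split: if_splits)
qed

lemma symmetric_poly_prod_vars_dvd: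
  fixes h :: "'a::comm_ring_1 mpoly"
  assumes iv: "in_vars n h" and sy: "symmetric_poly n h" and bd: "var_deg_le k h" and j: "j < n"
    and r: "msubst (zero_var j) h = 0"
  shows "\<exists>h1. h = single (all_ones n) 1 * h1 \<and> in_vars n h1 \<and> symmetric_poly n h1 \<and>
    var_deg_le (k - 1) h1 \<and> (k = 0 \<longrightarrow> h = 0)"
proof -
  have kj: "lookup m j \<noteq> 0" if "m \<in> keys h" for m
    using r that by (simp add: msubst_zero_var_eq_0_iff)
  have "lookup (all_ones n) i \<le> lookup m i" if "m \<in> keys h" for m i
    using symmetric_poly_keys_lookup_nonzero[OF sy j _ that kj, of i] by (auto simp: lookup_all_ones)
  then obtain h1 where h1: "h = single (all_ones n) 1 * h1" "\<And>\<nu>. lookup h1 \<nu> = lookup h (\<nu> + all_ones n)"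
    using monom_quotient[of h "all_ones n"] by blast
  moreover have "k = 0 \<longrightarrow> h = 0"
    using kj bd by (auto simp: var_deg_le_def) (metis all_not_in_conv le_zero_eq keys_eq_empty)
  ultimately show ?thesis
    using in_vars_quotient[OF iv] symmetric_poly_monom_quotient[OF sy]
      var_deg_le_all_ones_quotient[OF iv bd] by blast
qed

definition elem2 :: "nat \<Rightarrow> 'a::comm_ring_1 mpoly" where
  "elem2 i = (if i = 0 then Var 0 + Var 1 else if i = 1 then Var 0 * Var 1 else 0)"

definition elem3 :: "nat \<Rightarrow> 'a::comm_ring_1 mpoly" where
  "elem3 i = (if i = 0 then Var 0 + Var 1 + Var 2
     else if i = 1 then Var 0 * Var 1 + Var 0 * Var 2 + Var 1 * Var 2
     else if i = 2 then Var 0 * Var 1 * Var 2 else 0)"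

lemma Const_inverse_numeral_mult: "Const (1 / numeral k :: 'a::field_char_0) * numeral k = 1"
  by (simp add: Const_numeral[symmetric] Const_mult[symmetric])

lemma prod_vars2_eq_psums:
  "(Var 0 * Var 1 :: 'a::field_char_0 mpoly) = Const (1/2) * (psum 2 1 ^ 2 - psum 2 2)"
proof -
  have "(psum 2 1 ^ 2 - psum 2 2 :: 'a mpoly) = 2 * (Var 0 * Var 1)"
    by (simp add: psum2 power2_eq_square algebra_simps)
  then show ?thesis by (simp add: mult.assoc[symmetric] Const_inverse_numeral_mult)
qed

lemma elem3_2_eq_psums:
  "(Var 0 * Var 1 + Var 0 * Var 2 + Var 1 * Var 2 :: 'a::field_char_0 mpoly) =
    Const (1/2) * (psum 3 1 ^ 2 - psum 3 2)"
proof -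
  have "(psum 3 1 ^ 2 - psum 3 2 :: 'a mpoly) = 2 * (Var 0 * Var 1 + Var 0 * Var 2 + Var 1 * Var 2)"
    by (simp add: psum3 power2_eq_square algebra_simps)
  then show ?thesis by (simp only: mult.assoc[symmetric] Const_inverse_numeral_mult mult_1_left)
qed

lemma prod_vars3_eq_psums:
  "(Var 0 * Var 1 * Var 2 :: 'a::field_char_0 mpoly) =
    Const (1/6) * (psum 3 1 ^ 3 - 3 * psum 3 1 * psum 3 2 + 2 * psum 3 3)"
proof -
  have "(psum 3 1 ^ 3 - 3 * psum 3 1 * psum 3 2 + 2 * psum 3 3 :: 'a mpoly) = 6 * (Var 0 * Var 1 * Var 2)"
    unfolding psum3 by algebra
  then show ?thesis by (simp add: mult.assoc[symmetric] Const_inverse_numeral_mult)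
qed

lemma symmetric_poly_numeral: "symmetric_poly n (numeral k)"
  using symmetric_poly_Const[of n "numeral k"] by (simp add: Const_numeral)

lemma psum2_1: "(Var 0 + Var 1 :: 'a::comm_ring_1 mpoly) = psum 2 1" by (simp add: psum2)
lemma psum3_1: "(Var 0 + Var 1 + Var 2 :: 'a::comm_ring_1 mpoly) = psum 3 1" by (simp add: psum3)

lemmas symmetric_poly_intros =
  symmetric_poly_add symmetric_poly_diff symmetric_poly_mult symmetric_poly_Const symmetric_poly_power
  symmetric_poly_psum symmetric_poly_numeral

lemma symmetric_poly_prod_vars2: "symmetric_poly 2 (Var 0 * Var 1 :: 'a::field_char_0 mpoly)"
  unfolding prod_vars2_eq_psums by (intro symmetric_poly_intros)

lemma symmetric_poly_elem3_2:
  "symmetric_poly 3 (Var 0 * Var 1 + Var 0 * Var 2 + Var 1 * Var 2 :: 'a::field_char_0 mpoly)"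
  unfolding elem3_2_eq_psums by (intro symmetric_poly_intros)

lemma symmetric_poly_prod_vars3: "symmetric_poly 3 (Var 0 * Var 1 * Var 2 :: 'a::field_char_0 mpoly)"
  unfolding prod_vars3_eq_psums by (intro symmetric_poly_intros)

lemma symmetric_poly_elem2: "symmetric_poly 2 (elem2 i :: 'a::field_char_0 mpoly)"
  unfolding elem2_def psum2_1 by (simp add: symmetric_poly_psum symmetric_poly_prod_vars2 symmetric_poly_0)

lemma symmetric_poly_elem3: "symmetric_poly 3 (elem3 i :: 'a::field_char_0 mpoly)"
  unfolding elem3_def psum3_1
  by (simp add: symmetric_poly_psum symmetric_poly_elem3_2 symmetric_poly_prod_vars3 symmetric_poly_0)

lemma in_vars_elem2: "in_vars 2 (elem2 i)"
  by (auto simp: elem2_def intro!: in_vars_add in_vars_mult in_vars_Var in_vars_0)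
lemma in_vars_elem3: "in_vars 3 (elem3 i)"
  by (auto simp: elem3_def intro!: in_vars_add in_vars_mult in_vars_Var in_vars_0)

lemma var_deg_le_Var: "var_deg_le 1 (Var i)" by (simp add: Var_def var_deg_le_def lookup_single when_def)
lemma var_deg_le_Var_Var: "i \<noteq> j \<Longrightarrow> var_deg_le 1 (Var i * Var j)"
  by (simp add: Var_def mult_single var_deg_le_def lookup_add lookup_single when_def)
lemma var_deg_le_Var_Var_Var: "i \<noteq> j \<Longrightarrow> i \<noteq> l \<Longrightarrow> j \<noteq> l \<Longrightarrow> var_deg_le 1 (Var i * Var j * Var l)"
  by (simp add: Var_def mult_single var_deg_le_def lookup_add lookup_single when_def)

lemma var_deg_le_elem2: "var_deg_le 1 (elem2 i)"
  by (auto simp: elem2_def intro!: var_deg_le_add var_deg_le_Var var_deg_le_Var_Var var_deg_le_0)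
lemma var_deg_le_elem3: "var_deg_le 1 (elem3 i)"
  by (auto simp: elem3_def
      intro!: var_deg_le_add var_deg_le_Var var_deg_le_Var_Var var_deg_le_Var_Var_Var var_deg_le_0)

lemma all_ones_2: "all_ones 2 = single 0 1 + single 1 1"
  by (rule poly_mapping_eqI) (simp add: lookup_all_ones lookup_add lookup_single lookup_one when_def)
lemma all_ones_3: "all_ones 3 = single 0 1 + single 1 1 + single 2 1"
  by (rule poly_mapping_eqI) (simp add: lookup_all_ones lookup_add lookup_single lookup_one when_def)
lemma single_all_ones_2: "(single (all_ones 2) 1 :: 'a::comm_ring_1 mpoly) = Var 0 * Var 1"
  by (simp add: all_ones_2 Var_def mult_single)
lemma single_all_ones_3: "(single (all_ones 3) 1 :: 'a::comm_ring_1 mpoly) = Var 0 * Var 1 * Var 2"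
  by (simp add: all_ones_3 Var_def mult_single)

lemma total_deg_le_msubst_zero_var_1:
  assumes "in_vars 2 f" "var_deg_le k f"
  shows "total_deg_le k (msubst (zero_var 1) f)"
  unfolding total_deg_le_def
proof
  fix \<mu> assume \<mu>: "\<mu> \<in> keys (msubst (zero_var 1) f)"
  then have "\<mu> \<in> keys f" "lookup \<mu> 1 = 0" using keys_msubst_zero_var by auto
  moreover have "lookup \<mu> 2 = 0" using in_vars_lookup_eq_0[OF assms(1) \<open>\<mu> \<in> keys f\<close>] by simp
  moreover have "lookup \<mu> 0 \<le> k" using assms(2) \<open>\<mu> \<in> keys f\<close> by (simp add: var_deg_le_def)
  ultimately show "lookup \<mu> 0 + lookup \<mu> 1 + lookup \<mu> 2 \<le> k" by simp
qed

text \<open>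
  Existence: subtract the image of the part of \<open>f\<close> free of the last variable; the remainder vanishes
  when that variable is zero, so by symmetry it is \<open>e\<^sub>n\<close> times a symmetric polynomial whose exponents
  are smaller by one.
\<close>

lemma symmetric_poly2_reduce:
  fixes f :: "'a::field_char_0 mpoly"
  assumes fv: "in_vars 2 f" and fs: "symmetric_poly 2 f" and fb: "var_deg_le k f"
  shows "\<exists>G0 h1. in_vars 2 G0 \<and> total_deg_le k G0 \<and> f = msubst elem2 G0 + Var 0 * Var 1 * h1 \<and>
    in_vars 2 h1 \<and> symmetric_poly 2 h1 \<and> var_deg_le (k - 1) h1 \<and> (k = 0 \<longrightarrow> h1 = 0)"
proof -
  define G0 where "G0 = msubst (zero_var 1) f"
  have iv1: "in_vars 1 G0"
    unfolding G0_def using fv by (intro in_vars_msubst_zero_var) (simp add: numeral_2_eq_2)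
  then have iv2: "in_vars 2 G0" by (rule in_vars_mono) simp
  have td: "total_deg_le k G0"
    unfolding G0_def using fv fb by (rule total_deg_le_msubst_zero_var_1)
  have r: "msubst (zero_var 1) (msubst elem2 G0) = G0"
  proof -
    have "msubst (zero_var 1) (msubst elem2 G0) = msubst (\<lambda>i. msubst (zero_var 1) (elem2 i)) G0"
      by (rule msubst_msubst)
    also have "\<dots> = msubst Var G0"
      by (rule msubst_cong_vars[OF iv1]) (simp add: elem2_def zero_var_def msubst_add)
    finally show ?thesis by (simp add: msubst_Var_id)
  qed
  define h where "h = f - msubst elem2 G0"
  have "msubst (zero_var 1) h = msubst (zero_var 1) f - G0"
    unfolding h_def alg_hom_diff[OF alg_hom_msubst] r ..
  then have rh: "msubst (zero_var 1) h = 0" by (simp add: G0_def)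
  have hs: "symmetric_poly 2 h"
    unfolding h_def by (intro symmetric_poly_diff fs symmetric_poly_msubst symmetric_poly_elem2)
  have hv: "in_vars 2 h" unfolding h_def by (intro in_vars_diff fv in_vars_msubst[OF iv2] in_vars_elem2)
  have hb: "var_deg_le k h" unfolding h_def
    by (intro var_deg_le_diff fb var_deg_le_msubst3 var_deg_le_elem2 td) (rule in_vars_mono[OF iv2], simp)
  obtain h1 where h1: "h = single (all_ones 2) 1 * h1" "in_vars 2 h1" "symmetric_poly 2 h1"
      "var_deg_le (k - 1) h1" "k = 0 \<longrightarrow> h = 0"
    using symmetric_poly_prod_vars_dvd[OF hv hs hb, of 1] rh by auto
  have "k = 0 \<longrightarrow> h1 = 0"
    using h1(1,5) by (auto simp: single_all_ones_2 Var_nonzero)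
  moreover have "f = msubst elem2 G0 + Var 0 * Var 1 * h1"
    using h1(1) unfolding h_def single_all_ones_2 by (simp add: algebra_simps)
  ultimately show ?thesis using iv2 td h1 by blast
qed

lemma msubst_elem2_Var1_mult: "msubst elem2 (Var 1 * G) = Var 0 * Var 1 * msubst elem2 G"
  by (simp add: msubst_mult elem2_def)
lemma msubst_elem3_Var2_mult: "msubst elem3 (Var 2 * G) = Var 0 * Var 1 * Var 2 * msubst elem3 G"
  by (simp add: msubst_mult elem3_def)

lemma symmetric_poly2_msubst_elem2:
  fixes f :: "'a::field_char_0 mpoly"
  shows "in_vars 2 f \<Longrightarrow> symmetric_poly 2 f \<Longrightarrow> var_deg_le k f \<Longrightarrow>
    \<exists>G. in_vars 2 G \<and> total_deg_le k G \<and> msubst elem2 G = f"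
proof (induction k arbitrary: f)
  case 0
  from symmetric_poly2_reduce[OF 0] show ?case by auto
next
  case (Suc k)
  from symmetric_poly2_reduce[OF Suc.prems] obtain G0 h1 where
    s: "in_vars 2 G0" "total_deg_le (Suc k) G0" "f = msubst elem2 G0 + Var 0 * Var 1 * h1" "in_vars 2 h1"
       "symmetric_poly 2 h1" "var_deg_le k h1" by auto
  from Suc.IH[OF s(4,5,6)] obtain G1 where G1: "in_vars 2 G1" "total_deg_le k G1" "msubst elem2 G1 = h1"
    by blast
  show ?case
  proof (intro exI conjI)
    show "in_vars 2 (G0 + Var 1 * G1)" by (intro in_vars_add s in_vars_mult in_vars_Var G1) simp
    show "total_deg_le (Suc k) (G0 + Var 1 * G1)"
      by (intro total_deg_le_add s total_deg_le_Var_mult G1) simp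
    show "msubst elem2 (G0 + Var 1 * G1) = f"
      using s(3) G1(3) by (simp add: msubst_add msubst_elem2_Var1_mult)
  qed
qed

lemma symmetric_poly_zero_var_last:
  assumes "symmetric_poly (Suc n) f"
  shows "symmetric_poly n (msubst (zero_var n) f)"
  unfolding symmetric_poly_def
proof (intro allI impI)
  fix \<sigma> :: "nat \<Rightarrow> nat" and m :: "nat \<Rightarrow>\<^sub>0 nat" assume s: "\<sigma> permutes {..<n}"
  then have s': "\<sigma> permutes {..<Suc n}" by (rule permutes_subset) auto
  have "\<sigma> n = n" using s by (rule permutes_not_in) simp
  then have "lookup (Poly_Mapping.map_key \<sigma> m) n = lookup m n"
    by (simp add: map_key.rep_eq[OF permutes_inj[OF s]])
  then show "lookup (msubst (zero_var n) f) (Poly_Mapping.map_key \<sigma> m) = lookup (msubst (zero_var n) f) m"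
    using assms s' by (simp add: lookup_msubst_zero_var symmetric_poly_def)
qed

lemma symmetric_poly3_reduce:
  fixes f :: "'a::field_char_0 mpoly"
  assumes fv: "in_vars 3 f" and fs: "symmetric_poly 3 f" and fb: "var_deg_le k f"
  shows "\<exists>G0 h1. in_vars 3 G0 \<and> total_deg_le k G0 \<and> f = msubst elem3 G0 + Var 0 * Var 1 * Var 2 * h1 \<and>
    in_vars 3 h1 \<and> symmetric_poly 3 h1 \<and> var_deg_le (k - 1) h1 \<and> (k = 0 \<longrightarrow> h1 = 0)"
proof -
  have v2: "in_vars 2 (msubst (zero_var 2) f)"
    using fv by (intro in_vars_msubst_zero_var) (simp add: numeral_3_eq_3)
  have s2: "symmetric_poly 2 (msubst (zero_var 2) f)"
    using symmetric_poly_zero_var_last[of 2 f] fs by (simp add: numeral_3_eq_3 numeral_2_eq_2)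
  obtain H where H: "in_vars 2 H" "total_deg_le k H" "msubst elem2 H = msubst (zero_var 2) f"
    using symmetric_poly2_msubst_elem2[OF v2 s2 var_deg_le_msubst_zero_var[OF fb]] by blast
  have iv3: "in_vars 3 H" by (rule in_vars_mono[OF H(1)]) simp
  have r: "msubst (zero_var 2) (msubst elem3 H) = msubst (zero_var 2) f"
  proof -
    have "msubst (zero_var 2) (msubst elem3 H) = msubst (\<lambda>i. msubst (zero_var 2) (elem3 i)) H"
      by (rule msubst_msubst)
    also have "\<dots> = msubst elem2 H"
      by (rule msubst_cong_vars[OF H(1)])
         (auto simp: elem2_def elem3_def zero_var_def msubst_add msubst_mult less_2_cases_iff)
    finally show ?thesis using H(3) by simp
  qed
  define h where "h = f - msubst elem3 H"
  have rh: "msubst (zero_var 2) h = 0"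
    unfolding h_def by (simp add: alg_hom_diff[OF alg_hom_msubst] r)
  have hs: "symmetric_poly 3 h"
    unfolding h_def by (intro symmetric_poly_diff fs symmetric_poly_msubst symmetric_poly_elem3)
  have hv: "in_vars 3 h" unfolding h_def by (intro in_vars_diff fv in_vars_msubst[OF iv3] in_vars_elem3)
  have hb: "var_deg_le k h" unfolding h_def
    by (intro var_deg_le_diff fb var_deg_le_msubst3 var_deg_le_elem3 H(2) iv3)
  obtain h1 where h1: "h = single (all_ones 3) 1 * h1" "in_vars 3 h1" "symmetric_poly 3 h1"
      "var_deg_le (k - 1) h1" "k = 0 \<longrightarrow> h = 0"
    using symmetric_poly_prod_vars_dvd[OF hv hs hb, of 2] rh by auto
  have "k = 0 \<longrightarrow> h1 = 0"
    using h1(1,5) by (auto simp: single_all_ones_3 Var_nonzero)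
  moreover have "f = msubst elem3 H + Var 0 * Var 1 * Var 2 * h1"
    using h1(1) unfolding h_def single_all_ones_3 by (simp add: algebra_simps)
  ultimately show ?thesis using iv3 H(2) h1 by blast
qed

lemma symmetric_poly3_msubst_elem3:
  fixes f :: "'a::field_char_0 mpoly"
  shows "in_vars 3 f \<Longrightarrow> symmetric_poly 3 f \<Longrightarrow> var_deg_le k f \<Longrightarrow>
    \<exists>G. in_vars 3 G \<and> total_deg_le k G \<and> msubst elem3 G = f"
proof (induction k arbitrary: f)
  case 0
  from symmetric_poly3_reduce[OF 0] show ?case by auto
next
  case (Suc k)
  from symmetric_poly3_reduce[OF Suc.prems] obtain G0 h1 where
    s: "in_vars 3 G0" "total_deg_le (Suc k) G0" "f = msubst elem3 G0 + Var 0 * Var 1 * Var 2 * h1"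
       "in_vars 3 h1" "symmetric_poly 3 h1" "var_deg_le k h1" by auto
  from Suc.IH[OF s(4,5,6)] obtain G1 where G1: "in_vars 3 G1" "total_deg_le k G1" "msubst elem3 G1 = h1"
    by blast
  show ?case
  proof (intro exI conjI)
    show "in_vars 3 (G0 + Var 2 * G1)" by (intro in_vars_add s in_vars_mult in_vars_Var G1) simp
    show "total_deg_le (Suc k) (G0 + Var 2 * G1)"
      by (intro total_deg_le_add s total_deg_le_Var_mult G1) simp
    show "msubst elem3 (G0 + Var 2 * G1) = f"
      using s(3) G1(3) by (simp add: msubst_add msubst_elem3_Var2_mult)
  qed
qed

lemma Var_quotient:
  fixes G :: "'a::comm_ring_1 mpoly"
  assumes "\<And>m. m \<in> keys G \<Longrightarrow> lookup m j \<noteq> 0"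
  shows "\<exists>G1. G = Var j * G1 \<and> (\<forall>\<nu>. lookup G1 \<nu> = lookup G (\<nu> + single j 1))"
proof -
  have "lookup (single j 1) i \<le> lookup m i" if "m \<in> keys G" for m i
    using assms[OF that] by (auto simp: lookup_single when_def)
  from monom_quotient[of G "single j 1", OF this] show ?thesis by (simp add: Var_def)
qed

text \<open>Injectivity of a substitution, by repeatedly dividing out the variable \<open>x\<^sub>j\<^sub>+\<^sub>1\<close>.\<close>

lemma eq_0_by_Var_peeling:
  fixes E :: "'a::field_char_0 mpoly \<Rightarrow> 'a mpoly"
  assumes step: "\<And>G. in_vars n G \<Longrightarrow> E G = 0 \<Longrightarrow> msubst (zero_var j) G = 0"
    and mult: "\<And>G. E (Var j * G) = c * E G" and c: "c \<noteq> 0"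
    and G: "in_vars n G" "E G = 0"
  shows "G = 0"
proof -
  have "G = 0" if "in_vars n G" "\<forall>\<mu>\<in>keys G. lookup \<mu> j \<le> k" "E G = 0" for k G
    using that
  proof (induction k arbitrary: G)
    case 0
    have "\<forall>m\<in>keys G. lookup m j \<noteq> 0"
      using step[OF 0(1,3)] by (simp add: msubst_zero_var_eq_0_iff)
    with 0(2) have "keys G = {}" by fastforce
    then show ?case by simp
  next
    case (Suc k)
    have "\<forall>m\<in>keys G. lookup m j \<noteq> 0"
      using step[OF Suc(2,4)] by (simp add: msubst_zero_var_eq_0_iff)
    then obtain G1 where G1: "G = Var j * G1" "\<And>\<nu>. lookup G1 \<nu> = lookup G (\<nu> + single j 1)"
      using Var_quotient[of G j] by blast
    have "in_vars n G1" by (rule in_vars_quotient[OF Suc(2) G1(2)])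
    moreover have "\<forall>\<mu>\<in>keys G1. lookup \<mu> j \<le> k"
    proof
      fix \<mu> assume "\<mu> \<in> keys G1"
      then have "\<mu> + single j 1 \<in> keys G" using G1(2) by (simp add: in_keys_iff)
      then show "lookup \<mu> j \<le> k" using Suc(3) by (auto simp: lookup_add)
    qed
    moreover have "E G1 = 0" using Suc(4) c unfolding G1(1) mult by simp
    ultimately have "G1 = 0" by (rule Suc.IH)
    then show ?case using G1(1) by simp
  qed
  moreover obtain k where "var_deg_le k G" using ex_var_deg_le by blast
  ultimately show ?thesis using G by (auto simp: var_deg_le_def)
qed

lemma msubst_elem2_eq_0:
  fixes G :: "'a::field_char_0 mpoly"
  assumes "in_vars 2 G" "msubst elem2 G = 0"
  shows "G = 0"
proof (rule eq_0_by_Var_peeling[OF _ msubst_elem2_Var1_mult _ assms])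
  show "msubst (zero_var 1) G = 0" if "in_vars 2 G" "msubst elem2 G = 0" for G :: "'a mpoly"
  proof -
    have "msubst (zero_var 1) (msubst elem2 G) = msubst (\<lambda>i. msubst (zero_var 1) (elem2 i)) G"
      by (rule msubst_msubst)
    also have "\<dots> = msubst (zero_var 1) G"
      by (rule msubst_cong_vars[OF that(1)])
         (auto simp: elem2_def zero_var_def msubst_add msubst_mult less_2_cases_iff)
    finally show ?thesis using that(2) by simp
  qed
qed (simp add: Var_nonzero)

lemma msubst_elem3_eq_0:
  fixes G :: "'a::field_char_0 mpoly"
  assumes "in_vars 3 G" "msubst elem3 G = 0"
  shows "G = 0"
proof (rule eq_0_by_Var_peeling[OF _ msubst_elem3_Var2_mult _ assms])
  show "msubst (zero_var 2) G = 0" if "in_vars 3 G" "msubst elem3 G = 0" for G :: "'a mpoly"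
  proof -
    have "msubst elem2 (msubst (zero_var 2) G) = msubst (\<lambda>i. msubst elem2 (zero_var 2 i)) G"
      by (rule msubst_msubst)
    also have "\<dots> = msubst (\<lambda>i. msubst (zero_var 2) (elem3 i)) G"
      by (rule msubst_cong_vars[OF that(1)])
         (auto simp: elem2_def elem3_def zero_var_def msubst_add msubst_mult numeral_3_eq_3 less_Suc_eq)
    also have "\<dots> = msubst (zero_var 2) (msubst elem3 G)" by (rule msubst_msubst[symmetric])
    finally have "msubst elem2 (msubst (zero_var 2) G) = 0" using that(2) by simp
    moreover have "in_vars 2 (msubst (zero_var 2) G)"
      using that(1) by (intro in_vars_msubst_zero_var) (simp add: numeral_3_eq_3)
    ultimately show ?thesis using msubst_elem2_eq_0 by blast
  qed
qed (simp add: Var_nonzero)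

lemma msubst_elem2_inj:
  "in_vars 2 G \<Longrightarrow> in_vars 2 G' \<Longrightarrow> msubst elem2 G = msubst elem2 G' \<Longrightarrow> G = (G' :: 'a::field_char_0 mpoly)"
  using msubst_elem2_eq_0[of "G - G'"] by (simp add: in_vars_diff msubst_diff)

lemma msubst_elem3_inj:
  "in_vars 3 G \<Longrightarrow> in_vars 3 G' \<Longrightarrow> msubst elem3 G = msubst elem3 G' \<Longrightarrow> G = (G' :: 'a::field_char_0 mpoly)"
  using msubst_elem3_eq_0[of "G - G'"] by (simp add: in_vars_diff msubst_diff)

section \<open>Leading monomials and triangular bases\<close>

text \<open>\<open>weight\<close> orders the monomials \<open>e\<^sub>1\<^sup>a e\<^sub>2\<^sup>b e\<^sub>3\<^sup>c\<close> of the generators: first by the degree \<open>a + 2b + 3c\<close>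
  of the symmetric polynomial they produce, then lexicographically by \<open>b\<close> and \<open>c\<close>.\<close>

definition weight :: "(nat \<Rightarrow>\<^sub>0 nat) \<Rightarrow> nat \<times> nat \<times> nat" where
  "weight \<mu> = (lookup \<mu> 0 + 2 * lookup \<mu> 1 + 3 * lookup \<mu> 2, lookup \<mu> 1, lookup \<mu> 2)"

lemma weight_add: "weight (\<mu> + \<nu>) = weight \<mu> + weight \<nu>"
  by (simp add: weight_def lookup_add)

lemma lex_add_less:
  "x \<le> y \<Longrightarrow> z \<le> w \<Longrightarrow> x < y \<or> z < w \<Longrightarrow> x + z < y + (w :: nat \<times> nat \<times> nat)"
  by (cases x, cases y, cases z, cases w) auto

definition lead_monom :: "'a::comm_ring_1 mpoly \<Rightarrow> (nat \<Rightarrow>\<^sub>0 nat) \<Rightarrow> bool" where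
  "lead_monom G \<mu> \<longleftrightarrow> lookup G \<mu> \<noteq> 0 \<and> (\<forall>\<nu>\<in>keys G. \<nu> \<noteq> \<mu> \<longrightarrow> weight \<nu> < weight \<mu>)"

lemma lead_monom_weight_le: "lead_monom G \<mu> \<Longrightarrow> \<nu> \<in> keys G \<Longrightarrow> weight \<nu> \<le> weight \<mu>"
  unfolding lead_monom_def by (cases "\<nu> = \<mu>") auto

lemma lookup_mult_eq_0:
  fixes F G :: "'a::comm_ring_1 mpoly"
  assumes "\<And>a b. a \<in> keys F \<Longrightarrow> b \<in> keys G \<Longrightarrow> a + b \<noteq> m"
  shows "lookup (F * G) m = 0"
proof -
  have "m \<notin> keys (F * G)" using keys_mult[of F G] assms by blast
  then show ?thesis by (simp add: in_keys_iff)
qed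

lemma weight_less_lead_monom_add:
  assumes F: "lead_monom F \<mu>" and G: "lead_monom G \<nu>"
    and ab: "a \<in> keys F" "b \<in> keys G" "a \<noteq> \<mu> \<or> b \<noteq> \<nu>"
  shows "weight (a + b) < weight (\<mu> + \<nu>)"
  unfolding weight_add
  using lead_monom_weight_le[OF F ab(1)] lead_monom_weight_le[OF G ab(2)] ab F G
  by (intro lex_add_less) (auto simp: lead_monom_def)

lemma lookup_mult_lead_monom:
  fixes F G :: "'a::comm_ring_1 mpoly"
  assumes F: "lead_monom F \<mu>" and G: "lead_monom G \<nu>"
  shows "lookup (F * G) (\<mu> + \<nu>) = lookup F \<mu> * lookup G \<nu>"
proof -
  define F' where "F' = F - single \<mu> (lookup F \<mu>)"
  define G' where "G' = G - single \<nu> (lookup G \<nu>)"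
  have kF': "a \<in> keys F \<and> a \<noteq> \<mu>" if "a \<in> keys F'" for a
    using that by (auto simp: F'_def in_keys_iff lookup_minus lookup_single when_def split: if_splits)
  have kG': "b \<in> keys G \<and> b \<noteq> \<nu>" if "b \<in> keys G'" for b
    using that by (auto simp: G'_def in_keys_iff lookup_minus lookup_single when_def split: if_splits)
  have "F * G = single \<mu> (lookup F \<mu>) * single \<nu> (lookup G \<nu>) + single \<mu> (lookup F \<mu>) * G' + F' * G"
    by (simp add: F'_def G'_def algebra_simps)
  moreover have "lookup (single \<mu> (lookup F \<mu>) * G') (\<mu> + \<nu>) = 0"
  proof (rule lookup_mult_eq_0)
    fix a b assume "a \<in> keys (single \<mu> (lookup F \<mu>))" "b \<in> keys G'"
    then have "weight (a + b) < weight (\<mu> + \<nu>)"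
      using kG' F by (intro weight_less_lead_monom_add[OF F G])
        (auto simp: lead_monom_def in_keys_iff split: if_splits)
    then show "a + b \<noteq> \<mu> + \<nu>" by auto
  qed
  moreover have "lookup (F' * G) (\<mu> + \<nu>) = 0"
  proof (rule lookup_mult_eq_0)
    fix a b assume "a \<in> keys F'" "b \<in> keys G"
    then have "weight (a + b) < weight (\<mu> + \<nu>)" using kF' by (intro weight_less_lead_monom_add[OF F G]) auto
    then show "a + b \<noteq> \<mu> + \<nu>" by auto
  qed
  ultimately show ?thesis by (simp add: lookup_add mult_single)
qed

lemma lead_monom_mult:
  fixes F G :: "'a::idom mpoly"
  assumes F: "lead_monom F \<mu>" and G: "lead_monom G \<nu>"
  shows "lead_monom (F * G) (\<mu> + \<nu>)"
proof -
  have "weight m < weight (\<mu> + \<nu>)" if "m \<in> keys (F * G)" "m \<noteq> \<mu> + \<nu>" for m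
    using keys_mult[of F G] that weight_less_lead_monom_add[OF F G] by blast
  moreover have "lookup F \<mu> * lookup G \<nu> \<noteq> 0" using F G by (simp add: lead_monom_def)
  ultimately show ?thesis by (simp add: lead_monom_def lookup_mult_lead_monom[OF F G])
qed

lemma lead_monom_single: "c \<noteq> 0 \<Longrightarrow> lead_monom (single \<mu> c) \<mu>"
  by (simp add: lead_monom_def)

lemma lead_monom_power:
  fixes F :: "'a::idom mpoly"
  assumes "lead_monom F (single j d)"
  shows "lead_monom (F ^ k) (single j (d * k))"
proof (induction k)
  case 0 then show ?case by (simp add: lead_monom_def lookup_one)
next
  case (Suc k)
  have "single j d + single j (d * k) = single j (d * Suc k)" by (simp add: single_add[symmetric])
  then show ?case using lead_monom_mult[OF assms Suc] by simp
qed

definition lincomb :: "('i \<Rightarrow> 'a::comm_ring_1 mpoly) \<Rightarrow> ('i \<Rightarrow> 'a) \<Rightarrow> 'a mpoly" where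
  "lincomb B a = (\<Sum>i\<in>{i. a i \<noteq> 0}. Const (a i) * B i)"

definition fin_coeffs :: "'i set \<Rightarrow> ('i \<Rightarrow> 'a::zero) \<Rightarrow> bool" where
  "fin_coeffs I a \<longleftrightarrow> (\<forall>i. i \<notin> I \<longrightarrow> a i = 0) \<and> finite {i. a i \<noteq> 0}"

lemma lincomb_superset: "finite S \<Longrightarrow> {i. a i \<noteq> 0} \<subseteq> S \<Longrightarrow> lincomb B a = (\<Sum>i\<in>S. Const (a i) * B i)"
  unfolding lincomb_def by (rule sum.mono_neutral_left) auto

definition lin_span :: "'i set \<Rightarrow> ('i \<Rightarrow> 'a::comm_ring_1 mpoly) \<Rightarrow> 'a mpoly set" where
  "lin_span I B = {G. \<exists>a. fin_coeffs I a \<and> G = lincomb B a}"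

lemma lin_span_0: "0 \<in> lin_span I B"
  unfolding lin_span_def by (rule CollectI, rule exI[of _ "\<lambda>_. 0"]) (simp add: fin_coeffs_def lincomb_def)

lemma lin_span_add: "p \<in> lin_span I B \<Longrightarrow> q \<in> lin_span I B \<Longrightarrow> p + q \<in> lin_span I B"
proof -
  assume "p \<in> lin_span I B" "q \<in> lin_span I B"
  then obtain a a' where a: "fin_coeffs I a" "p = lincomb B a" and a': "fin_coeffs I a'" "q = lincomb B a'"
    by (auto simp: lin_span_def)
  let ?U = "{i. a i \<noteq> 0} \<union> {i. a' i \<noteq> 0}"
  have fU: "finite ?U" using a(1) a'(1) by (simp add: fin_coeffs_def)
  have "fin_coeffs I (\<lambda>i. a i + a' i)"
    using a(1) a'(1) unfolding fin_coeffs_def by (auto intro: finite_subset[OF _ fU])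
  moreover have "p + q = lincomb B (\<lambda>i. a i + a' i)"
  proof -
    have sup: "{i. a i + a' i \<noteq> 0} \<subseteq> ?U" by auto
    show ?thesis using a a'
      by (simp add: lincomb_superset[OF fU, of a] lincomb_superset[OF fU, of a'] lincomb_superset[OF fU sup]
        Const_add distrib_right sum.distrib)
  qed
  ultimately show ?thesis by (auto simp: lin_span_def)
qed

lemma lin_span_smult: "p \<in> lin_span I B \<Longrightarrow> Const c * p \<in> lin_span I B"
proof -
  assume "p \<in> lin_span I B"
  then obtain a where a: "fin_coeffs I a" "p = lincomb B a" by (auto simp: lin_span_def)
  let ?U = "{i. a i \<noteq> 0}"
  have fU: "finite ?U" using a(1) by (simp add: fin_coeffs_def)
  have "fin_coeffs I (\<lambda>i. c * a i)"
    using a(1) unfolding fin_coeffs_def by (auto intro: finite_subset[OF _ fU])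
  moreover have "Const c * p = lincomb B (\<lambda>i. c * a i)"
  proof -
    have sup: "{i. c * a i \<noteq> 0} \<subseteq> ?U" by auto
    show ?thesis using a
      by (simp add: lincomb_superset[OF fU, of a] lincomb_superset[OF fU sup] sum_distrib_left Const_mult
          mult.assoc)
  qed
  ultimately show ?thesis by (auto simp: lin_span_def)
qed

lemma lin_span_basis: "i \<in> I \<Longrightarrow> Const c * B i \<in> lin_span I B"
proof -
  assume i: "i \<in> I"
  let ?a = "\<lambda>j. if j = i then c else 0"
  have "fin_coeffs I ?a" using i by (auto simp: fin_coeffs_def)
  moreover have "lincomb B ?a = (\<Sum>j\<in>{i}. Const (?a j) * B j)" by (rule lincomb_superset) auto
  then have "Const c * B i = lincomb B ?a" by simp
  ultimately show ?thesis by (auto simp: lin_span_def)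
qed

lemma lin_span_diff: "p \<in> lin_span I B \<Longrightarrow> q \<in> lin_span I B \<Longrightarrow> p - q \<in> lin_span I B"
  using lin_span_add[of p I B "Const (-1) * q"] lin_span_smult[of q I B "-1"] by (simp add: Const_minus)

lemma lin_span_sum: "(\<And>i. i \<in> S \<Longrightarrow> f i \<in> lin_span I B) \<Longrightarrow> (\<Sum>i\<in>S. f i) \<in> lin_span I B"
  by (induction S rule: infinite_finite_induct) (auto simp: lin_span_0 lin_span_add)

lemma lincomb_diff:
  assumes "fin_coeffs I a" "fin_coeffs I a'"
  shows "lincomb B a - lincomb B a' = lincomb B (\<lambda>i. a i - a' i)"
proof -
  let ?U = "{i. a i \<noteq> 0} \<union> {i. a' i \<noteq> 0}"
  have fU: "finite ?U" using assms by (simp add: fin_coeffs_def)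
  have "{i. a i - a' i \<noteq> 0} \<subseteq> ?U" by auto
  then show ?thesis
    by (simp add: lincomb_superset[OF fU, of a] lincomb_superset[OF fU, of a'] lincomb_superset[OF fU]
        Const_diff left_diff_distrib sum_subtractf)
qed

context
  fixes B :: "'i \<Rightarrow> 'a::field mpoly" and L :: "'i \<Rightarrow> nat \<Rightarrow>\<^sub>0 nat"
    and I :: "'i set" and Piv :: "(nat \<Rightarrow>\<^sub>0 nat) set"
  assumes lead: "\<And>i. i \<in> I \<Longrightarrow> lead_monom (B i) (L i)"
begin

lemma triangular_single_in_lin_span:
  assumes L_onto: "\<And>\<mu>. \<mu> \<in> Piv \<Longrightarrow> \<exists>i\<in>I. L i = \<mu>"
    and keys_B: "\<And>i. i \<in> I \<Longrightarrow> keys (B i) \<subseteq> Piv"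
  shows "\<mu> \<in> Piv \<Longrightarrow> single \<mu> c \<in> lin_span I B"
proof (induction "weight \<mu>" arbitrary: \<mu> c rule: less_induct)
  case less
  obtain i where i: "i \<in> I" "L i = \<mu>" using L_onto[OF less.prems] by blast
  define b where "b = lookup (B i) \<mu>"
  have b: "b \<noteq> 0" using lead[OF i(1)] i(2) by (simp add: lead_monom_def b_def)
  define R where "R = B i - single \<mu> b"
  have "single \<nu> (lookup R \<nu>) \<in> lin_span I B" if \<nu>: "\<nu> \<in> keys R" for \<nu>
  proof -
    have "\<nu> \<in> keys (B i)" "\<nu> \<noteq> \<mu>"
      using \<nu> by (auto simp: R_def b_def in_keys_iff lookup_minus lookup_single when_def split: if_splits)
    then show ?thesis
      using lead[OF i(1)] keys_B[OF i(1)] i(2) by (intro less.hyps) (auto simp: lead_monom_def)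
  qed
  then have "(\<Sum>\<nu>\<in>keys R. single \<nu> (lookup R \<nu>)) \<in> lin_span I B" by (rule lin_span_sum)
  then have "R \<in> lin_span I B" by (simp add: sum_single_lookup)
  moreover have "single \<mu> c = Const (c / b) * (B i - R)"
    using b by (simp add: R_def Const_mult_single)
  ultimately show "single \<mu> c \<in> lin_span I B"
    using lin_span_basis[OF i(1), where c = 1 and B = B] by (simp add: lin_span_smult lin_span_diff)
qed

lemma triangular_lin_span:
  assumes "\<And>\<mu>. \<mu> \<in> Piv \<Longrightarrow> \<exists>i\<in>I. L i = \<mu>" "\<And>i. i \<in> I \<Longrightarrow> keys (B i) \<subseteq> Piv"
    and "keys G \<subseteq> Piv"
  shows "G \<in> lin_span I B"
proof -
  have "(\<Sum>\<mu>\<in>keys G. single \<mu> (lookup G \<mu>)) \<in> lin_span I B"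
    using triangular_single_in_lin_span[OF assms(1,2)] assms(3) by (intro lin_span_sum) blast
  then show ?thesis by (simp add: sum_single_lookup)
qed

lemma triangular_independent:
  assumes L_inj: "inj_on L I" and L_Piv: "\<And>i. i \<in> I \<Longrightarrow> L i \<in> Piv" and weight_inj: "inj_on weight Piv"
    and d: "fin_coeffs I d" "lincomb B d = 0"
  shows "d = (\<lambda>_. 0)"
proof (rule ccontr)
  define S where "S = {i. d i \<noteq> 0}"
  assume "d \<noteq> (\<lambda>_. 0)"
  then have "S \<noteq> {}" by (auto simp: S_def fun_eq_iff)
  moreover have fS: "finite S" and SI: "S \<subseteq> I" using d(1) by (auto simp: S_def fin_coeffs_def)
  ultimately have "Max ((\<lambda>i. weight (L i)) ` S) \<in> (\<lambda>i. weight (L i)) ` S" by (intro Max_in) auto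
  then obtain i0 where "i0 \<in> S" "weight (L i0) = Max ((\<lambda>i. weight (L i)) ` S)" by auto
  with fS have i0: "i0 \<in> S" "\<And>i. i \<in> S \<Longrightarrow> weight (L i) \<le> weight (L i0)" by auto
  have "lookup (B i) (L i0) = 0" if "i \<in> S - {i0}" for i
  proof (rule ccontr)
    assume "lookup (B i) (L i0) \<noteq> 0"
    then have "weight (L i0) \<le> weight (L i)"
      using lead_monom_weight_le[OF lead] that SI by (auto simp: in_keys_iff)
    with i0(2)[of i] that have "weight (L i0) = weight (L i)" by simp
    then have "L i0 = L i" using that i0(1) SI L_Piv by (intro inj_onD[OF weight_inj]) auto
    then have "i0 = i" using that i0(1) SI by (intro inj_onD[OF L_inj]) auto
    then show False using that by simp
  qed
  then have "lookup (lincomb B d) (L i0) = d i0 * lookup (B i0) (L i0)"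
    unfolding lincomb_def S_def[symmetric] lookup_sum lookup_Const_mult
    using i0(1) fS by (subst sum.remove) auto
  moreover have "d i0 \<noteq> 0" "lookup (B i0) (L i0) \<noteq> 0"
    using i0(1) lead SI by (auto simp: S_def lead_monom_def)
  ultimately show False using d(2) by simp
qed

lemma triangular_lincomb_unique:
  assumes "inj_on L I" "\<And>i. i \<in> I \<Longrightarrow> L i \<in> Piv" "inj_on weight Piv"
    and a: "fin_coeffs I a" "fin_coeffs I a'" "lincomb B a = lincomb B a'"
  shows "a = a'"
proof -
  have "fin_coeffs I (\<lambda>i. a i - a' i)"
    using a(1,2) by (auto simp: fin_coeffs_def intro: finite_subset[of _ "{i. a i \<noteq> 0} \<union> {i. a' i \<noteq> 0}"])
  moreover have "lincomb B (\<lambda>i. a i - a' i) = 0" using a lincomb_diff[of I a a' B] by simp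
  ultimately have "(\<lambda>i. a i - a' i) = (\<lambda>_. 0)" using triangular_independent[OF assms(1-3)] by blast
  then show ?thesis by (simp add: fun_eq_iff)
qed

end

lemma is_basis_transfer:
  fixes E :: "'a::field mpoly \<Rightarrow> 'a mpoly" and B b :: "'i \<Rightarrow> 'a mpoly"
  assumes E: "alg_hom E" and E_inj: "\<And>G G'. in_vars N G \<Longrightarrow> in_vars N G' \<Longrightarrow> E G = E G' \<Longrightarrow> G = G'"
    and B: "\<And>i. i \<in> I \<Longrightarrow> E (B i) = b i \<and> in_vars N (B i)" and b_S: "b ` I \<subseteq> S"
    and S: "\<And>p. p \<in> S \<Longrightarrow> \<exists>G. in_vars N G \<and> keys G \<subseteq> Piv \<and> E G = p"
    and L_onto: "\<And>\<mu>. \<mu> \<in> Piv \<Longrightarrow> \<exists>i\<in>I. L i = \<mu>" and keys_B: "\<And>i. i \<in> I \<Longrightarrow> keys (B i) \<subseteq> Piv"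
    and lead: "\<And>i. i \<in> I \<Longrightarrow> lead_monom (B i) (L i)"
    and L_inj: "inj_on L I" and L_Piv: "\<And>i. i \<in> I \<Longrightarrow> L i \<in> Piv" and weight_inj: "inj_on weight Piv"
  shows "is_basis I b S"
  unfolding is_basis_def
proof (intro conjI b_S ballI)
  have B_supp: "i \<in> I" if "fin_coeffs I a" "a i \<noteq> 0" for a i using that by (auto simp: fin_coeffs_def)
  have E_lincomb: "E (lincomb B a) = lincomb b a" if "fin_coeffs I a" for a
    unfolding lincomb_def using B_supp[OF that]
    by (simp add: alg_hom_sum[OF E] alg_hom_mult[OF E] alg_hom_Const[OF E] B)
  have in_vars_lincomb: "in_vars N (lincomb B a)" if "fin_coeffs I a" for a
    unfolding lincomb_def using B_supp[OF that]
    by (auto intro!: in_vars_sum in_vars_mult in_vars_Const simp: B)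
  fix p assume "p \<in> S"
  then obtain G where G: "in_vars N G" "keys G \<subseteq> Piv" "E G = p" using S by blast
  obtain a where a: "fin_coeffs I a" "G = lincomb B a"
    using triangular_lin_span[OF lead L_onto keys_B G(2)] by (auto simp: lin_span_def)
  have "a' = a" if "fin_coeffs I a'" "p = lincomb b a'" for a'
    using that a G E_lincomb E_inj[OF in_vars_lincomb in_vars_lincomb]
      triangular_lincomb_unique[OF lead L_inj L_Piv weight_inj] by metis
  moreover have "fin_coeffs I a \<and> p = lincomb b a" using a G(3) E_lincomb by simp
  ultimately show "\<exists>!a. (\<forall>i. i \<notin> I \<longrightarrow> a i = 0) \<and> finite {i. a i \<noteq> 0} \<and>
      p = (\<Sum>i\<in>{i. a i \<noteq> 0}. Const (a i) * b i)"
    unfolding fin_coeffs_def lincomb_def by blast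
qed

lemma monom3_eqI:
  fixes \<mu> \<nu> :: "nat \<Rightarrow>\<^sub>0 nat"
  assumes "keys \<mu> \<subseteq> {..<3}" "keys \<nu> \<subseteq> {..<3}"
    and "lookup \<mu> 0 = lookup \<nu> 0" "lookup \<mu> 1 = lookup \<nu> 1" "lookup \<mu> 2 = lookup \<nu> 2"
  shows "\<mu> = \<nu>"
proof (rule poly_mapping_eqI)
  fix i :: nat
  show "lookup \<mu> i = lookup \<nu> i"
  proof (cases "i < 3")
    case True
    then have "i = 0 \<or> i = 1 \<or> i = 2" by auto
    then show ?thesis using assms by auto
  next
    case False
    then have "i \<notin> keys \<mu>" "i \<notin> keys \<nu>" using assms(1,2) by auto
    then show ?thesis by (simp add: in_keys_iff)
  qed
qed

lemma inj_on_weight: "inj_on weight {\<mu>. keys \<mu> \<subseteq> {..<3}}"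
  by (rule inj_onI, rule monom3_eqI) (auto simp: weight_def)

definition whomog :: "nat \<Rightarrow> 'a::comm_ring_1 mpoly \<Rightarrow> bool" where
  "whomog d G \<longleftrightarrow> (\<forall>\<mu>\<in>keys G. fst (weight \<mu>) = d)"

lemma whomog_add: "whomog d p \<Longrightarrow> whomog d q \<Longrightarrow> whomog d (p + q)"
  unfolding whomog_def by (rule all_keys_add)
lemma whomog_diff: "whomog d p \<Longrightarrow> whomog d q \<Longrightarrow> whomog d (p - q)"
  unfolding diff_conv_add_uminus by (intro whomog_add) (simp_all add: whomog_def)
lemma whomog_mult: "whomog d p \<Longrightarrow> whomog e q \<Longrightarrow> whomog (d + e) (p * q)"
  unfolding whomog_def by (rule all_keys_mult, assumption, assumption) (simp add: weight_add)
lemma whomog_Const: "whomog 0 (Const c)" by (simp add: whomog_def Const_def weight_def)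
lemma whomog_Var0: "whomog 1 (Var 0)" by (simp add: whomog_def Var_def weight_def lookup_single lookup_one)
lemma whomog_Var1: "whomog 2 (Var 1)" by (simp add: whomog_def Var_def weight_def lookup_single)
lemma whomog_Var2: "whomog 3 (Var 2)" by (simp add: whomog_def Var_def weight_def lookup_single)

lemma lookup_Var_mult: "lookup (Var j * X) (single j 1 + \<nu>) = lookup (X :: 'a::comm_ring_1 mpoly) \<nu>"
proof -
  have "Var j * X = (\<Sum>m\<in>keys X. single (single j 1 + m) (lookup X m))"
    by (subst (1) sum_single_lookup[symmetric, of X]) (simp add: Var_def sum_distrib_left mult_single)
  then show ?thesis by (simp add: lookup_sum lookup_single when_def in_keys_iff)
qed

lemma lookup_Var_mult_eq_0: "lookup \<nu> j = 0 \<Longrightarrow> lookup (Var j * X) \<nu> = (0 :: 'a::comm_ring_1)"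
  by (rule lookup_mult_eq_0) (auto simp: Var_def lookup_add split: if_splits)

section \<open>The substitution \<open>x\<^sub>1 = t, x\<^sub>2 = -t\<close> on polynomials in the generators\<close>

lemma in_keys_msubst:
  fixes G :: "'a::idom mpoly"
  assumes subst_monom: "\<And>\<mu>'. \<mu>' \<in> keys G \<Longrightarrow> subst_monom \<psi> \<mu>' = (if P \<mu>' then single (g \<mu>') (s \<mu>') else 0)"
    and inj: "inj_on g {\<mu>'\<in>keys G. P \<mu>'}" and s: "\<And>\<mu>'. s \<mu>' \<noteq> 0"
    and mu: "\<mu> \<in> keys G" "P \<mu>"
  shows "g \<mu> \<in> keys (msubst \<psi> G)"
proof -
  let ?c = "\<lambda>\<mu>'. lookup G \<mu>' * (if P \<mu>' \<and> g \<mu>' = g \<mu> then s \<mu>' else 0)"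
  have "lookup (msubst \<psi> G) (g \<mu>) = (\<Sum>\<mu>'\<in>keys G. ?c \<mu>')"
    unfolding msubst_eq lookup_sum
    by (rule sum.cong) (auto simp: subst_monom lookup_Const_mult lookup_single when_def)
  also have "\<dots> = ?c \<mu> + (\<Sum>\<mu>'\<in>keys G - {\<mu>}. ?c \<mu>')"
    using mu by (subst sum.remove[of _ \<mu>]) auto
  also have "(\<Sum>\<mu>'\<in>keys G - {\<mu>}. ?c \<mu>') = 0"
    using inj mu by (intro sum.neutral) (auto dest: inj_onD)
  finally have "lookup (msubst \<psi> G) (g \<mu>) = lookup G \<mu> * s \<mu>" using mu by simp
  then show ?thesis using mu s by (simp add: in_keys_iff)
qed

lemma neg_Var0_sq_power:
  "(- (Var 0 ^ 2) :: 'a::comm_ring_1 mpoly) ^ k = single (single 0 (2 * k)) ((-1) ^ k)"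
proof -
  have "(-1 :: 'a mpoly) ^ k = Const ((-1) ^ k)" by (simp only: Const_power Const_minus Const_1)
  then have "(- (Var 0 ^ 2) :: 'a mpoly) ^ k = Const ((-1) ^ k) * Var 0 ^ (2 * k)"
    by (subst power_minus) (simp only: power_mult)
  then show ?thesis by (simp add: Var_power Const_mult_single)
qed

text \<open>
  Under \<open>x\<^sub>1 = t, x\<^sub>2 = -t\<close> the generators become \<open>\<tau> 0 \<in> {x\<^sub>3, 0}\<close>, \<open>-t\<^sup>2\<close> and \<open>0\<close>.  A surviving monomial
  \<open>\<mu>\<close> of \<open>G\<close> is sent to \<open>\<plusminus> x\<^sub>3\<^bsup>\<mu>\<^sub>0\<^esup> t\<^bsup>2\<mu>\<^sub>1\<^esup>\<close>, injectively, so no cancellation can hide a power of \<open>t\<close>.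
\<close>

lemma indep_t_msubst_keys:
  fixes G :: "'a::field_char_0 mpoly"
  assumes G: "in_vars 3 G" and indep: "indep_t (msubst \<tau> G)"
    and \<tau>: "\<tau> 0 = (if b then Var 2 else 0)" "\<tau> 1 = - (Var 0 ^ 2)" "\<tau> 2 = 0"
    and \<mu>: "\<mu> \<in> keys G" "lookup \<mu> 2 = 0" "b \<or> lookup \<mu> 0 = 0"
  shows "lookup \<mu> 1 = 0"
proof -
  let ?P = "\<lambda>\<mu>. lookup \<mu> 2 = 0 \<and> (b \<or> lookup \<mu> 0 = 0)"
  let ?g = "\<lambda>\<mu>. single 2 (lookup \<mu> 0) + single 0 (2 * lookup \<mu> 1) :: nat \<Rightarrow>\<^sub>0 nat"
  have keys3: "keys \<mu>' \<subseteq> {..<3}" if "\<mu>' \<in> keys G" for \<mu>'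
    using G that by (auto simp: in_vars_def)
  have "subst_monom \<tau> \<mu>' = (if ?P \<mu>' then single (?g \<mu>') ((-1) ^ lookup \<mu>' 1) else 0)"
    if "\<mu>' \<in> keys G" for \<mu>'
    unfolding subst_monom_3vars[OF keys3[OF that]] \<tau> neg_Var0_sq_power
    by (cases b) (auto simp: power_0_left Var_power mult_single)
  moreover have "inj_on ?g {\<mu>' \<in> keys G. ?P \<mu>'}"
  proof (rule inj_onI)
    fix x y assume x: "x \<in> {\<mu>' \<in> keys G. ?P \<mu>'}" and y: "y \<in> {\<mu>' \<in> keys G. ?P \<mu>'}" and e: "?g x = ?g y"
    have "lookup (?g x) 0 = lookup (?g y) 0" "lookup (?g x) 2 = lookup (?g y) 2" using e by simp_all
    then show "x = y"
      using x y by (intro monom3_eqI keys3) (simp_all add: lookup_add lookup_single)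
  qed
  ultimately have "?g \<mu> \<in> keys (msubst \<tau> G)"
    by (rule in_keys_msubst) (use \<mu> in auto)
  then have "lookup (?g \<mu>) 0 = 0" using indep by (simp add: indep_t_def)
  then show ?thesis by (simp add: lookup_add lookup_single)
qed

section \<open>Two variables\<close>

declare single_one[simp del]

lemma neg_one_power_mult_of_nat_nonzero: "k \<noteq> 0 \<Longrightarrow> ((-1) ^ m * of_nat k :: 'a::field_char_0) \<noteq> 0"
  by simp

fun newton2 :: "nat \<Rightarrow> 'a::comm_ring_1 mpoly" where
  "newton2 0 = Const 2"
| "newton2 (Suc 0) = Var 0"
| "newton2 (Suc (Suc k)) = Var 0 * newton2 (Suc k) - Var 1 * newton2 k"

lemma newton2_1[simp]: "newton2 1 = Var 0"
  using newton2.simps(2) by (simp only: One_nat_def)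

lemma msubst_elem2_newton2: "msubst elem2 (newton2 k) = (psum 2 k :: 'a::comm_ring_1 mpoly)"
proof (induction k rule: newton2.induct)
  case 1 then show ?case by (simp add: psum2 Const_numeral)
next
  case 2 then show ?case by (simp add: psum2 elem2_def)
next
  case (3 k)
  then show ?case by (simp add: msubst_diff msubst_mult elem2_def psum2 algebra_simps)
qed

lemma in_vars_newton2: "in_vars 2 (newton2 k)"
  by (induction k rule: newton2.induct) (auto intro!: in_vars_Const in_vars_Var in_vars_diff in_vars_mult)

lemma whomog_newton2: "whomog k (newton2 k)"
proof (induction k rule: newton2.induct)
  case 1 then show ?case using whomog_Const by simp
next
  case 2 then show ?case using whomog_Var0 by (simp add: One_nat_def)
next
  case (3 k)
  have a: "whomog (Suc (Suc k)) (Var 0 * newton2 (Suc k) :: 'a mpoly)"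
    using whomog_mult[OF whomog_Var0, of "Suc k" "newton2 (Suc k)"] 3 by (simp add: One_nat_def)
  have b: "whomog (Suc (Suc k)) (Var 1 * newton2 k :: 'a mpoly)"
    using whomog_mult[OF whomog_Var1, of k "newton2 k"] 3 by simp
  show ?case using whomog_diff[OF a b] by simp
qed

text \<open>The coefficient \<open>\<plusminus>(2m + 1)\<close> of \<open>e\<^sub>1e\<^sub>2\<^sup>m\<close> in \<open>p\<^sub>2\<^sub>m\<^sub>+\<^sub>1\<close> is where characteristic 0 is needed.\<close>

lemma lookup_newton2:
  "lookup (newton2 (2*m)) (single 1 m) = (2 * (-1)^m :: 'a::comm_ring_1) \<and>
   lookup (newton2 (2*m+1)) (single 0 1 + single 1 m) = ((-1)^m * of_nat (2*m+1) :: 'a)"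
proof (induction m)
  case 0
  show ?case by (simp add: lookup_Const Var_def lookup_one)
next
  case (Suc m)
  have e1: "2 * Suc m = Suc (Suc (2*m))" by simp
  have e2: "2 * Suc m + 1 = Suc (Suc (2*m+1))" by simp
  have s1: "single 1 (Suc m) = single 1 1 + single 1 m" by (metis plus_1_eq_Suc single_add)
  have s2: "single 0 1 + single 1 (Suc m) = single 1 1 + (single 0 1 + single 1 m)" by (simp only: s1 add_ac)
  have A: "lookup (newton2 (2 * Suc m)) (single 1 (Suc m)) = (2 * (-1)^Suc m :: 'a)"
  proof -
    have "lookup (newton2 (2 * Suc m)) (single 1 (Suc m)) =
        (lookup (Var 0 * newton2 (2*m+1)) (single 1 (Suc m)) -
         lookup (Var 1 * newton2 (2*m)) (single 1 1 + single 1 m) :: 'a)"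
      by (simp only: e1 newton2.simps lookup_minus s1) (simp add: One_nat_def)
    also have "\<dots> = - (2 * (-1)^m)"
      by (simp add: lookup_Var_mult_eq_0 lookup_single lookup_Var_mult Suc[THEN conjunct1])
    finally show ?thesis by simp
  qed
  have B: "lookup (newton2 (2 * Suc m + 1)) (single 0 1 + single 1 (Suc m)) =
      ((-1)^Suc m * of_nat (2 * Suc m + 1) :: 'a)"
  proof -
    have "lookup (newton2 (2 * Suc m + 1)) (single 0 1 + single 1 (Suc m)) = (
          lookup (Var 0 * newton2 (2 * Suc m)) (single 0 1 + single 1 (Suc m)) -
          lookup (Var 1 * newton2 (2*m+1)) (single 1 1 + (single 0 1 + single 1 m)) :: 'a)"
      by (simp only: e2 newton2.simps lookup_minus s2) (simp add: e1)
    also have "\<dots> = 2 * (-1)^Suc m - (-1)^m * of_nat (2*m+1)"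
      by (simp only: lookup_Var_mult A Suc[THEN conjunct2])
    also have "\<dots> = (-1)^Suc m * of_nat (2 * Suc m + 1)" by (simp add: algebra_simps)
    finally show ?thesis .
  qed
  show ?case using A B by blast
qed

lemma lookup_lead_newton2:
  "lookup (single 0 1 + single 1 m :: nat \<Rightarrow>\<^sub>0 nat) i = (if i = 0 then 1 else if i = 1 then m else 0)"
  by (simp add: lookup_add lookup_single lookup_one when_def)
lemma keys_newton2:
  assumes "\<nu> \<in> keys (newton2 k)"
  shows "lookup \<nu> 0 + 2 * lookup \<nu> 1 = k" "\<And>i. 2 \<le> i \<Longrightarrow> lookup \<nu> i = 0"
proof -
  show z: "\<And>i. 2 \<le> i \<Longrightarrow> lookup \<nu> i = 0" using in_vars_lookup_eq_0[OF in_vars_newton2 assms] .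
  have "fst (weight \<nu>) = k" using whomog_newton2[of k] assms unfolding whomog_def by blast
  with z[of 2] show "lookup \<nu> 0 + 2 * lookup \<nu> 1 = k" by (simp add: weight_def)
qed

lemma lead_monom_newton2: "lead_monom (newton2 (2*m+1) :: 'a::field_char_0 mpoly) (single 0 1 + single 1 m)"
proof -
  let ?t = "single 0 1 + single 1 m :: nat \<Rightarrow>\<^sub>0 nat"
  have e: "lookup (newton2 (2*m+1) :: 'a mpoly) ?t = (-1)^m * of_nat (2*m+1)"
    using lookup_newton2[of m, where 'a='a] by blast
  have c: "lookup (newton2 (2*m+1) :: 'a mpoly) ?t \<noteq> 0"
    unfolding e by (rule neg_one_power_mult_of_nat_nonzero) simp
  have "weight \<nu> < weight ?t" if nu: "\<nu> \<in> keys (newton2 (2*m+1) :: 'a mpoly)" "\<nu> \<noteq> ?t" for \<nu>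
  proof -
    note k = keys_newton2[OF nu(1)]
    have "lookup \<nu> 1 \<noteq> m"
    proof
      assume a: "lookup \<nu> 1 = m"
      then have "lookup \<nu> 0 = 1" using k(1) by simp
      then have "\<nu> = ?t"
        by (intro poly_mapping_eqI) (use a k(2) in \<open>auto simp: lookup_lead_newton2\<close>)
      then show False using nu(2) by simp
    qed
    then have "lookup \<nu> 1 < m" using k(1) by simp
    then show ?thesis using k by (simp add: weight_def lookup_lead_newton2)
  qed
  then show ?thesis using c by (simp add: lead_monom_def)
qed

definition subst_t_elem2 :: "nat \<Rightarrow> 'a::comm_ring_1 mpoly" where
  "subst_t_elem2 i = (if i = 1 then - (Var 0 ^ 2) else 0)"

lemma subst_t_msubst_elem2:
  "in_vars 2 G \<Longrightarrow> subst_t (msubst elem2 G) = msubst subst_t_elem2 (G :: 'a::comm_ring_1 mpoly)"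
  unfolding alg_hom_msubst_comp[OF alg_hom_subst_t]
  by (rule msubst_cong_vars)
     (auto simp: less_2_cases_iff elem2_def subst_t_elem2_def alg_hom_add[OF alg_hom_subst_t]
       alg_hom_mult[OF alg_hom_subst_t] subst_t_Var power2_eq_square)

definition T2_support :: "(nat \<Rightarrow>\<^sub>0 nat) set" where
  "T2_support = {\<mu>. keys \<mu> \<subseteq> {..<2} \<and> (lookup \<mu> 0 = 0 \<longrightarrow> lookup \<mu> 1 = 0)}"

lemma keys_T2_support:
  fixes G :: "'a::field_char_0 mpoly"
  assumes G: "in_vars 2 G" and T: "msubst elem2 G \<in> T 2"
  shows "keys G \<subseteq> T2_support"
proof
  fix \<mu> assume \<mu>: "\<mu> \<in> keys G"
  have "indep_t (msubst subst_t_elem2 G)"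
    using T by (simp add: T_def mono_supersym_def subst_t_msubst_elem2[OF G])
  with in_vars_mono[OF G] have "lookup \<mu> 1 = 0" if "lookup \<mu> 0 = 0"
    by (rule indep_t_msubst_keys[where b = False])
       (use \<mu> that in_vars_lookup_eq_0[OF G \<mu>] in \<open>simp_all add: subst_t_elem2_def\<close>)
  moreover have "keys \<mu> \<subseteq> {..<2}" using G \<mu> by (auto simp: in_vars_def)
  ultimately show "\<mu> \<in> T2_support" by (simp add: T2_support_def)
qed

lemma T2_msubst_elem2:
  fixes p :: "'a::field_char_0 mpoly"
  assumes p: "p \<in> T 2"
  shows "\<exists>G. in_vars 2 G \<and> keys G \<subseteq> T2_support \<and> msubst elem2 G = p"
proof -
  have "in_vars 2 p" "symmetric_poly 2 p" using p by (auto simp: T_def mono_supersym_def)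
  moreover obtain k where "var_deg_le k p" using ex_var_deg_le by blast
  ultimately obtain G where G: "in_vars 2 G" "msubst elem2 G = p"
    using symmetric_poly2_msubst_elem2 by blast
  then show ?thesis using keys_T2_support[OF G(1)] p by blast
qed

definition proper2_pre :: "nat \<times> nat option \<Rightarrow> 'a::comm_ring_1 mpoly" where
  "proper2_pre = (\<lambda>(c, e). Var 0 ^ c * (case e of None \<Rightarrow> 1 | Some m \<Rightarrow> newton2 (2 * m + 1)))"

definition proper2_lead :: "nat \<times> nat option \<Rightarrow> (nat \<Rightarrow>\<^sub>0 nat)" where
  "proper2_lead = (\<lambda>(c, e). single 0 c + (case e of None \<Rightarrow> 0 | Some m \<Rightarrow> single 0 1 + single 1 m))"

lemma lookup_proper2_lead:
  "lookup (proper2_lead (c, e)) i =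
    (if i = 0 then c + (case e of None \<Rightarrow> 0 | Some m \<Rightarrow> 1)
     else if i = 1 then (case e of None \<Rightarrow> 0 | Some m \<Rightarrow> m) else 0)"
  by (cases e) (simp_all add: proper2_lead_def lookup_add lookup_single when_def)

lemma msubst_proper2_pre: "msubst elem2 (proper2_pre i) = (proper2 i :: 'a::comm_ring_1 mpoly)"
  by (cases i) (auto simp: proper2_pre_def proper2_def msubst_mult msubst_power msubst_elem2_newton2 elem2_def
      psum2_1 split: option.splits)

lemma in_vars_proper2_pre: "in_vars 2 (proper2_pre i)"
  by (cases i) (auto simp: proper2_pre_def split: option.splits
      intro!: in_vars_mult in_vars_power in_vars_Var in_vars_newton2 in_vars_1)

lemma lead_monom_proper2_pre: "lead_monom (proper2_pre i :: 'a::field_char_0 mpoly) (proper2_lead i)"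
proof -
  obtain c e where i: "i = (c, e)" by (cases i)
  have v: "lead_monom (Var 0 ^ c :: 'a mpoly) (single 0 c)" by (simp add: Var_power lead_monom_single)
  show ?thesis
  proof (cases e)
    case None then show ?thesis using v i by (simp add: proper2_pre_def proper2_lead_def)
  next
    case (Some m) then show ?thesis
      using lead_monom_mult[OF v lead_monom_newton2[of m]] i by (simp add: proper2_pre_def proper2_lead_def)
  qed
qed

lemma proper2_in_subalg: "proper2 i \<in> subalg (range (\<lambda>k. psum 2 (2 * k + 1)))"
proof -
  have g: "psum 2 (2 * m + 1) \<in> subalg (range (\<lambda>k. psum 2 (2 * k + 1)))" for m
    by (rule subalg.gen) simp
  from g[of 0] show ?thesis
    by (cases i) (auto simp: proper2_def split: option.splits
        intro!: subalg.mult subalg_power g subalg.const[of 1, simplified])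
qed

lemma keys_proper2_pre: "keys (proper2_pre i :: 'a::field_char_0 mpoly) \<subseteq> T2_support"
proof -
  have "proper2 i \<in> (T 2 :: 'a mpoly set)" using subalg_odd_psums_in_T[OF proper2_in_subalg] by simp
  then show ?thesis using keys_T2_support[OF in_vars_proper2_pre] by (simp add: msubst_proper2_pre)
qed

lemma proper2_lead_in_support: "proper2_lead i \<in> T2_support"
proof -
  obtain c e where i: "i = (c, e)" by (cases i)
  have "keys (proper2_lead i) \<subseteq> {..<2}"
    by (auto simp: i in_keys_iff lookup_proper2_lead split: if_splits)
  then show ?thesis by (cases e) (simp_all add: i T2_support_def lookup_proper2_lead)
qed

lemma inj_on_proper2_lead: "inj_on proper2_lead proper_idx2"
proof (rule inj_onI)
  fix i j assume i: "i \<in> proper_idx2" and j: "j \<in> proper_idx2" and e: "proper2_lead i = proper2_lead j"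
  obtain c e1 d e2 where ij: "i = (c, e1)" "j = (d, e2)" by (cases i, cases j)
  have "lookup (proper2_lead i) k = lookup (proper2_lead j) k" for k using e by simp
  from this[of 0] this[of 1] show "i = j"
    using i j unfolding ij by (cases e1; cases e2) (auto simp: proper_idx2_def lookup_proper2_lead)
qed

lemma proper2_lead_onto: "\<mu> \<in> T2_support \<Longrightarrow> \<exists>i\<in>proper_idx2. proper2_lead i = \<mu>"
proof -
  assume "\<mu> \<in> T2_support"
  then have kv: "keys \<mu> \<subseteq> {..<2}" and z: "lookup \<mu> 0 = 0 \<longrightarrow> lookup \<mu> 1 = 0"
    by (auto simp: T2_support_def)
  define i where "i = (if lookup \<mu> 1 = 0 then (lookup \<mu> 0, None) else (lookup \<mu> 0 - 1, Some (lookup \<mu> 1)))"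
  have "i \<in> proper_idx2" by (simp add: i_def proper_idx2_def)
  moreover have "proper2_lead i = \<mu>"
  proof (rule monom3_eqI)
    show "keys (proper2_lead i) \<subseteq> {..<3}" "keys \<mu> \<subseteq> {..<3}"
      using kv by (auto simp: i_def in_keys_iff lookup_proper2_lead split: if_splits)
    have "lookup \<mu> 2 = 0" using kv by (auto simp: in_keys_iff)
    then show "lookup (proper2_lead i) 0 = lookup \<mu> 0" "lookup (proper2_lead i) 1 = lookup \<mu> 1"
      "lookup (proper2_lead i) 2 = lookup \<mu> 2"
      using z by (auto simp: i_def lookup_proper2_lead)
  qed
  ultimately show ?thesis by blast
qed

theorem is_basis_T2: "is_basis proper_idx2 (proper2 :: _ \<Rightarrow> 'a::field_char_0 mpoly) (T 2)"
proof (rule is_basis_transfer[where E = "msubst elem2" and B = proper2_pre and N = 2 and L = proper2_lead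
      and Piv = T2_support])
  show "proper2 ` proper_idx2 \<subseteq> T 2"
    using subalg_odd_psums_in_T[OF proper2_in_subalg] by auto
  show "inj_on weight T2_support"
    by (rule inj_on_subset[OF inj_on_weight]) (auto simp: T2_support_def)
qed (auto simp: alg_hom_msubst msubst_proper2_pre in_vars_proper2_pre T2_msubst_elem2 msubst_elem2_inj
    proper2_lead_onto keys_proper2_pre lead_monom_proper2_pre inj_on_proper2_lead proper2_lead_in_support)

section \<open>Three variables\<close>

text \<open>
  For \<open>n = 3\<close> we use the generators \<open>e\<^sub>1, e\<^sub>2, e\<^sub>1e\<^sub>2 - e\<^sub>3\<close> instead of \<open>e\<^sub>1, e\<^sub>2, e\<^sub>3\<close>: the third one is
  killed by the substitution \<open>x\<^sub>1 = t, x\<^sub>2 = -t\<close>.  The two systems are related by the involution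
  \<open>gens3_swap\<close>, so the fundamental theorem transfers.
\<close>

definition gens3 :: "nat \<Rightarrow> 'a::comm_ring_1 mpoly" where
  "gens3 i = (if i = 2 then elem3 0 * elem3 1 - elem3 2 else elem3 i)"

definition gens3_swap :: "nat \<Rightarrow> 'a::comm_ring_1 mpoly" where
  "gens3_swap i = (if i = 2 then Var 0 * Var 1 - Var 2 else Var i)"

lemma msubst_gens3_swap:
  "in_vars 3 G \<Longrightarrow> msubst elem3 (msubst gens3_swap G) = msubst gens3 (G :: 'a::comm_ring_1 mpoly)"
  unfolding msubst_msubst
  by (rule msubst_cong_vars)
     (auto simp: less_Suc_eq numeral_3_eq_3 numeral_2_eq_2 gens3_swap_def gens3_def msubst_diff msubst_mult)

lemma gens3_swap_involution:
  "in_vars 3 G \<Longrightarrow> msubst gens3_swap (msubst gens3_swap G) = (G :: 'a::comm_ring_1 mpoly)"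
proof -
  assume G: "in_vars 3 G"
  have "msubst gens3_swap (msubst gens3_swap G) = msubst Var G"
    unfolding msubst_msubst
    by (rule msubst_cong_vars[OF G])
       (auto simp: less_Suc_eq numeral_3_eq_3 numeral_2_eq_2 gens3_swap_def msubst_diff msubst_mult)
  then show ?thesis by (simp add: msubst_Var_id)
qed

lemma in_vars_gens3_swap: "in_vars 3 G \<Longrightarrow> in_vars 3 (msubst gens3_swap G)"
  by (rule in_vars_msubst) (auto simp: gens3_swap_def intro!: in_vars_diff in_vars_mult in_vars_Var)

lemma msubst_gens3_inj:
  "in_vars 3 G \<Longrightarrow> in_vars 3 G' \<Longrightarrow> msubst gens3 G = msubst gens3 G' \<Longrightarrow> G = (G' :: 'a::field_char_0 mpoly)"
proof -
  assume G: "in_vars 3 G" and G': "in_vars 3 G'" and e: "msubst gens3 G = msubst gens3 G'"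
  have "msubst gens3_swap G = msubst gens3_swap G'"
    using msubst_elem3_inj[OF in_vars_gens3_swap[OF G] in_vars_gens3_swap[OF G']] e
      msubst_gens3_swap[OF G] msubst_gens3_swap[OF G'] by simp
  then have "msubst gens3_swap (msubst gens3_swap G) = msubst gens3_swap (msubst gens3_swap G')" by simp
  then show ?thesis using gens3_swap_involution[OF G] gens3_swap_involution[OF G'] by simp
qed

lemma symmetric_poly3_msubst_gens3:
  "in_vars 3 p \<Longrightarrow> symmetric_poly 3 p \<Longrightarrow> \<exists>G. in_vars 3 G \<and> msubst gens3 G = (p :: 'a::field_char_0 mpoly)"
proof -
  assume pv: "in_vars 3 p" and ps: "symmetric_poly 3 p"
  obtain k where "var_deg_le k p" using ex_var_deg_le by blast
  then obtain H where H: "in_vars 3 H" "msubst elem3 H = p"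
    using symmetric_poly3_msubst_elem3[OF pv ps] by blast
  have "msubst gens3 (msubst gens3_swap H) = p"
    using msubst_gens3_swap[OF in_vars_gens3_swap[OF H(1)]] gens3_swap_involution[OF H(1)] H(2) by simp
  then show ?thesis using in_vars_gens3_swap[OF H(1)] by blast
qed

definition subst_t_gens3 :: "nat \<Rightarrow> 'a::comm_ring_1 mpoly" where
  "subst_t_gens3 i = (if i = 0 then Var 2 else if i = 1 then - (Var 0 ^ 2) else 0)"

lemma subst_t_msubst_gens3:
  fixes G :: "'a::comm_ring_1 mpoly"
  assumes "in_vars 3 G"
  shows "subst_t (msubst gens3 G) = msubst subst_t_gens3 G"
proof -
  note h = alg_hom_subst_t
  have Var: "subst_t (Var 0) = Var 0" "subst_t (Var 1) = - Var 0" "subst_t (Var 2) = Var 2"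
    by (simp_all add: subst_t_Var)
  have "subst_t (elem3 0) = (Var 2 :: 'a mpoly)"
    by (simp add: elem3_def alg_hom_add[OF h] Var)
  moreover have "subst_t (elem3 1) = (- (Var 0 ^ 2) :: 'a mpoly)"
    by (simp add: elem3_def alg_hom_add[OF h] alg_hom_mult[OF h] Var power2_eq_square algebra_simps)
  moreover have "subst_t (elem3 2) = (- (Var 0 ^ 2) * Var 2 :: 'a mpoly)"
    by (simp add: elem3_def alg_hom_mult[OF h] Var power2_eq_square)
  moreover have "i = 0 \<or> i = 1 \<or> i = 2" if "i < 3" for i :: nat
    using that by auto
  ultimately have "subst_t (gens3 i) = (subst_t_gens3 i :: 'a mpoly)" if "i < 3" for i
    using that
    by (auto simp: gens3_def subst_t_gens3_def alg_hom_diff[OF h] alg_hom_mult[OF h] mult.commute)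
  then show ?thesis
    unfolding alg_hom_msubst_comp[OF h] by (intro msubst_cong_vars[OF assms])
qed

definition T3_support :: "(nat \<Rightarrow>\<^sub>0 nat) set" where
  "T3_support = {\<mu>. keys \<mu> \<subseteq> {..<3} \<and> (lookup \<mu> 2 = 0 \<longrightarrow> lookup \<mu> 1 = 0)}"

lemma keys_T3_support:
  fixes G :: "'a::field_char_0 mpoly"
  assumes G: "in_vars 3 G" and T: "msubst gens3 G \<in> T 3"
  shows "keys G \<subseteq> T3_support"
proof
  fix \<mu> assume \<mu>: "\<mu> \<in> keys G"
  have "indep_t (msubst subst_t_gens3 G)"
    using T by (simp add: T_def mono_supersym_def subst_t_msubst_gens3[OF G])
  with G have "lookup \<mu> 1 = 0" if "lookup \<mu> 2 = 0"
    by (rule indep_t_msubst_keys[where b = True]) (use \<mu> that in \<open>simp_all add: subst_t_gens3_def\<close>)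
  moreover have "keys \<mu> \<subseteq> {..<3}" using G \<mu> by (auto simp: in_vars_def)
  ultimately show "\<mu> \<in> T3_support" by (simp add: T3_support_def)
qed

lemma T3_msubst_gens3:
  assumes p: "p \<in> T 3"
  shows "\<exists>G. in_vars 3 G \<and> keys G \<subseteq> T3_support \<and> msubst gens3 G = (p :: 'a::field_char_0 mpoly)"
proof -
  have pv: "in_vars 3 p" and ps: "symmetric_poly 3 p" using p by (auto simp: T_def mono_supersym_def)
  obtain G where G: "in_vars 3 G" "msubst gens3 G = p" using symmetric_poly3_msubst_gens3[OF pv ps] by blast
  then show ?thesis using keys_T3_support[OF G(1)] p by blast
qed

fun newton3 :: "nat \<Rightarrow> 'a::comm_ring_1 mpoly" where
  "newton3 0 = Const 3"
| "newton3 (Suc 0) = Var 0"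
| "newton3 (Suc (Suc 0)) = Var 0 * Var 0 - Const 2 * Var 1"
| "newton3 (Suc (Suc (Suc k))) =
    Var 0 * newton3 (Suc (Suc k)) - Var 1 * newton3 (Suc k) + (Var 0 * Var 1 - Var 2) * newton3 k"

lemma msubst_gens3_newton3: "msubst gens3 (newton3 k) = (psum 3 k :: 'a::comm_ring_1 mpoly)"
proof (induction k rule: newton3.induct)
  case 1 then show ?case by (simp add: psum3 Const_numeral)
next
  case 2 then show ?case by (simp add: psum3 gens3_def elem3_def)
next
  case 3 then show ?case
    by (simp add: psum3 gens3_def elem3_def msubst_diff msubst_mult Const_numeral algebra_simps
        power2_eq_square)
next
  case (4 k)
  have e: "msubst gens3 (Var 0 * Var 1 - Var 2) = (elem3 2 :: 'a mpoly)"
    by (simp add: gens3_def msubst_diff msubst_mult)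
  show ?case
    by (simp add: msubst_add msubst_diff msubst_mult e 4[simplified] psum3)
       (simp add: gens3_def elem3_def algebra_simps power_Suc)
qed

lemma in_vars_newton3: "in_vars 3 (newton3 k)"
  by (induction k rule: newton3.induct)
     (auto intro!: in_vars_Const in_vars_Var in_vars_diff in_vars_mult in_vars_add)

lemma whomog_newton3: "whomog k (newton3 k :: 'a::comm_ring_1 mpoly)"
proof (induction k rule: newton3.induct)
  case 1 then show ?case using whomog_Const by simp
next
  case 2 then show ?case using whomog_Var0 by (simp add: One_nat_def)
next
  case 3
  have a: "whomog 2 (Var 0 * Var 0 :: 'a mpoly)" using whomog_mult[OF whomog_Var0 whomog_Var0] by simp
  have b: "whomog 2 (Const 2 * Var 1 :: 'a mpoly)"
    using whomog_mult[OF whomog_Const whomog_Var1] by (simp add: numeral_2_eq_2)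
  show ?case using whomog_diff[OF a b] by (simp add: numeral_2_eq_2)
next
  case (4 k)
  have a: "whomog (Suc (Suc (Suc k))) (Var 0 * newton3 (Suc (Suc k)) :: 'a mpoly)"
    using whomog_mult[OF whomog_Var0, of "Suc (Suc k)" "newton3 (Suc (Suc k))"] 4 by (simp add: One_nat_def)
  have b: "whomog (Suc (Suc (Suc k))) (Var 1 * newton3 (Suc k) :: 'a mpoly)"
    using whomog_mult[OF whomog_Var1, of "Suc k" "newton3 (Suc k)"] 4 by simp
  have c1: "whomog 3 (Var 0 * Var 1 :: 'a mpoly)" using whomog_mult[OF whomog_Var0 whomog_Var1] by simp
  have c: "whomog (Suc (Suc (Suc k))) ((Var 0 * Var 1 - Var 2) * newton3 k :: 'a mpoly)"
    using whomog_mult[OF whomog_diff[OF c1 whomog_Var2], of k "newton3 k"] 4 by (simp add: numeral_3_eq_3)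
  show ?case using whomog_add[OF whomog_diff[OF a b] c] by simp
qed

lemma lookup_newton3_rec:
  assumes "lookup \<nu> 0 = 0"
  shows "lookup (newton3 (Suc (Suc (Suc k)))) \<nu> =
    (- lookup (Var 1 * newton3 (Suc k)) \<nu> - lookup (Var 2 * newton3 k) \<nu> :: 'a::comm_ring_1)"
proof -
  have "(Var 0 * Var 1 - Var 2) * newton3 k = Var 0 * (Var 1 * newton3 k) - Var 2 * (newton3 k :: 'a mpoly)"
    by (simp add: algebra_simps)
  then show ?thesis
    by (simp add: lookup_add lookup_minus lookup_Var_mult_eq_0[OF assms])
qed

lemma lookup_newton3_even:
  "lookup (newton3 (2 * Suc i)) (single 1 (Suc i)) = (2 * (-1) ^ Suc i :: 'a::comm_ring_1)"
proof (induction i)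
  case 0
  have "lookup (Var 0 * Var 0 :: 'a mpoly) (single 1 1) = 0"
    by (rule lookup_Var_mult_eq_0) (simp add: lookup_single)
  moreover have "lookup (Var 1 :: 'a mpoly) (single 1 1) = 1" by (simp add: Var_def)
  ultimately show ?case by (simp add: numeral_2_eq_2 lookup_minus lookup_Const_mult One_nat_def)
next
  case (Suc i)
  have e: "2 * Suc (Suc i) = Suc (Suc (Suc (Suc (2 * i))))" by simp
  have s1: "single 1 (Suc (Suc i)) = single 1 1 + single 1 (Suc i)" by (metis plus_1_eq_Suc single_add)
  have "lookup (newton3 (2 * Suc (Suc i))) (single 1 (Suc (Suc i))) =
        (- lookup (Var 1 * newton3 (Suc (Suc (2 * i)))) (single 1 1 + single 1 (Suc i))
         - lookup (Var 2 * newton3 (Suc (2 * i))) (single 1 (Suc (Suc i))) :: 'a)"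
    unfolding e by (subst lookup_newton3_rec) (simp_all add: lookup_single lookup_add s1)
  also have "\<dots> = - lookup (newton3 (2 * Suc i)) (single 1 (Suc i))"
    by (simp add: lookup_Var_mult lookup_Var_mult_eq_0 lookup_single)
  finally show ?case using Suc by simp
qed

lemma lookup_newton3_odd:
  "lookup (newton3 (2*j+3)) (single 1 j + single 2 1) = ((-1) ^ Suc j * of_nat (2*j+3) :: 'a::comm_ring_1)"
proof (induction j)
  case 0
  have e: "2 * 0 + 3 = Suc (Suc (Suc 0))" by simp
  have "lookup (newton3 (2 * 0 + 3)) (single 1 0 + single 2 1) =
      (- lookup (Var 1 * newton3 (Suc 0)) (single 2 1) - lookup (Var 2 * newton3 0) (single 2 1 + 0) :: 'a)"
    unfolding e by (subst lookup_newton3_rec) (simp_all add: lookup_single)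
  also have "\<dots> = - 3"
  proof -
    have a: "lookup (Var 1 * newton3 (Suc 0)) (single 2 1) = (0::'a)"
      by (rule lookup_Var_mult_eq_0) (simp add: lookup_single)
    have b: "lookup (Var 2 * newton3 0) (single 2 1 + 0) = (lookup (newton3 0) 0 :: 'a)"
      by (rule lookup_Var_mult)
    show ?thesis by (simp only: a b) (simp add: lookup_Const)
  qed
  finally show ?case by simp
next
  case (Suc j)
  have e: "2 * Suc j + 3 = Suc (Suc (Suc (Suc (Suc (2 * j)))))" by simp
  have s1: "single 1 (Suc j) + single 2 1 = single 1 1 + (single 1 j + single 2 1)"
    by (metis plus_1_eq_Suc single_add add.assoc)
  have s2: "single 1 (Suc j) + single 2 1 = single 2 1 + single 1 (Suc j)" by (simp add: add.commute)
  have h1: "lookup (Var 1 * newton3 (Suc (Suc (Suc (2 * j))))) (single 1 (Suc j) + single 2 1) =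
      (lookup (newton3 (2*j+3)) (single 1 j + single 2 1) :: 'a)"
    unfolding s1 by (simp add: lookup_Var_mult numeral_3_eq_3)
  have h2: "lookup (Var 2 * newton3 (Suc (Suc (2 * j)))) (single 1 (Suc j) + single 2 1) =
      (lookup (newton3 (2 * Suc j)) (single 1 (Suc j)) :: 'a)"
    unfolding s2 by (simp add: lookup_Var_mult)
  have "lookup (newton3 (2 * Suc j + 3)) (single 1 (Suc j) + single 2 1) =
      (- lookup (Var 1 * newton3 (Suc (Suc (Suc (2 * j))))) (single 1 (Suc j) + single 2 1)
       - lookup (Var 2 * newton3 (Suc (Suc (2 * j)))) (single 1 (Suc j) + single 2 1) :: 'a)"
    unfolding e by (rule lookup_newton3_rec) (simp add: lookup_add lookup_single)
  also have "\<dots> = - lookup (newton3 (2*j+3)) (single 1 j + single 2 1)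
      - lookup (newton3 (2 * Suc j)) (single 1 (Suc j))"
    by (simp only: h1 h2)
  also have "\<dots> = - ((-1) ^ Suc j * of_nat (2*j+3)) - 2 * (-1) ^ Suc j"
    by (simp only: Suc lookup_newton3_even)
  also have "\<dots> = (-1) ^ Suc (Suc j) * of_nat (2 * Suc j + 3)"
    by (simp add: algebra_simps)
  finally show ?case .
qed

lemma msubst_gens3_newton3_odd_in_T: "msubst gens3 (newton3 (2*k+1)) \<in> T 3"
  unfolding msubst_gens3_newton3 by (rule psum_odd_in_T) simp

lemma keys_newton3_odd: "keys (newton3 (2*k+1) :: 'a::field_char_0 mpoly) \<subseteq> T3_support"
  by (rule keys_T3_support[OF in_vars_newton3 msubst_gens3_newton3_odd_in_T])

lemma lookup_lead_newton3:
  "lookup (single 1 j + single 2 1 :: nat \<Rightarrow>\<^sub>0 nat) i = (if i = 1 then j else if i = 2 then 1 else 0)"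
  by (simp add: lookup_add lookup_single when_def)

lemma weight_less_lead_newton3:
  assumes \<nu>: "keys \<nu> \<subseteq> {..<3}" "lookup \<nu> 0 + 2 * lookup \<nu> 1 + 3 * lookup \<nu> 2 = 2 * j + 3"
    "lookup \<nu> 2 = 0 \<longrightarrow> lookup \<nu> 1 = 0" "\<nu> \<noteq> single 1 j + single 2 1"
  shows "weight \<nu> < weight (single 1 j + single 2 1)"
proof -
  let ?t = "single 1 j + single 2 1 :: nat \<Rightarrow>\<^sub>0 nat"
  have "lookup \<nu> 1 < j \<or> lookup \<nu> 1 = j \<and> lookup \<nu> 2 = 0"
  proof (rule ccontr)
    assume "\<not> ?thesis"
    with \<nu>(2,3) have "lookup \<nu> 0 = lookup ?t 0" "lookup \<nu> 1 = lookup ?t 1" "lookup \<nu> 2 = lookup ?t 2"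
      by (auto simp: lookup_lead_newton3)
    then have "\<nu> = ?t"
      using \<nu>(1) by (intro monom3_eqI) (auto simp: in_keys_iff lookup_lead_newton3 split: if_splits)
    with \<nu>(4) show False ..
  qed
  then show ?thesis using \<nu>(2) by (auto simp: weight_def lookup_lead_newton3)
qed

lemma lead_monom_newton3: "lead_monom (newton3 (2*j+3) :: 'a::field_char_0 mpoly) (single 1 j + single 2 1)"
  unfolding lead_monom_def
proof (intro conjI ballI impI)
  show "lookup (newton3 (2*j+3) :: 'a mpoly) (single 1 j + single 2 1) \<noteq> 0"
    unfolding lookup_newton3_odd by (rule neg_one_power_mult_of_nat_nonzero) simp
  fix \<nu> assume \<nu>: "\<nu> \<in> keys (newton3 (2*j+3) :: 'a mpoly)" "\<nu> \<noteq> single 1 j + single 2 1"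
  have "2 * (j + 1) + 1 = 2 * j + 3" by simp
  then have "\<nu> \<in> T3_support" using keys_newton3_odd[of "j + 1", where 'a='a] \<nu>(1) by (simp only:) blast
  moreover have "lookup \<nu> 0 + 2 * lookup \<nu> 1 + 3 * lookup \<nu> 2 = 2 * j + 3"
    using whomog_newton3[of "2*j+3", where 'a='a] \<nu>(1) unfolding whomog_def weight_def by auto
  ultimately show "weight \<nu> < weight (single 1 j + single 2 1)"
    using \<nu>(2) by (intro weight_less_lead_newton3) (auto simp: T3_support_def)
qed

lemma lead_monom_newton3_3: "lead_monom (newton3 3 :: 'a::field_char_0 mpoly) (single 2 1)"
  using lead_monom_newton3[of 0, where 'a='a] by simp

definition proper3_pre :: "nat \<times> nat \<times> nat option \<Rightarrow> 'a::comm_ring_1 mpoly" where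
  "proper3_pre = (\<lambda>(c1, c3, e). Var 0 ^ c1 * newton3 3 ^ c3 *
     (case e of None \<Rightarrow> 1 | Some m \<Rightarrow> newton3 (2 * m + 1)))"

definition proper3_lead :: "nat \<times> nat \<times> nat option \<Rightarrow> (nat \<Rightarrow>\<^sub>0 nat)" where
  "proper3_lead = (\<lambda>(c1, c3, e). single 0 c1 + single 2 c3 +
     (case e of None \<Rightarrow> 0 | Some m \<Rightarrow> single 1 (m - 1) + single 2 1))"

lemma lookup_proper3_lead:
  "lookup (proper3_lead (c1, c3, e)) i =
    (if i = 0 then c1
     else if i = 1 then (case e of None \<Rightarrow> 0 | Some m \<Rightarrow> m - 1)
     else if i = 2 then c3 + (case e of None \<Rightarrow> 0 | Some m \<Rightarrow> 1) else 0)"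
  by (cases e) (simp_all add: proper3_lead_def lookup_add lookup_single when_def)

lemma msubst_proper3_pre: "msubst gens3 (proper3_pre i) = (proper3 i :: 'a::comm_ring_1 mpoly)"
proof -
  have "gens3 0 = (psum 3 1 :: 'a mpoly)" by (simp add: gens3_def elem3_def psum3_1)
  then show ?thesis
    by (cases i) (auto simp: proper3_pre_def proper3_def msubst_mult msubst_power msubst_gens3_newton3
        split: option.splits)
qed

lemma in_vars_proper3_pre: "in_vars 3 (proper3_pre i)"
  by (cases i) (auto simp: proper3_pre_def split: option.splits
      intro!: in_vars_mult in_vars_power in_vars_Var in_vars_newton3 in_vars_1)

lemma lead_monom_proper3_pre:
  assumes "i \<in> proper_idx3"
  shows "lead_monom (proper3_pre i :: 'a::field_char_0 mpoly) (proper3_lead i)"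
proof -
  obtain c1 c3 e where i: "i = (c1, c3, e)" by (cases i) auto
  have "lead_monom (Var 0 ^ c1 :: 'a mpoly) (single 0 c1)" by (simp add: Var_power lead_monom_single)
  moreover have "lead_monom (newton3 3 ^ c3 :: 'a mpoly) (single 2 c3)"
    using lead_monom_power[OF lead_monom_newton3_3[where 'a='a], of c3] by simp
  ultimately have vq: "lead_monom (Var 0 ^ c1 * newton3 3 ^ c3 :: 'a mpoly) (single 0 c1 + single 2 c3)"
    by (rule lead_monom_mult)
  show ?thesis
  proof (cases e)
    case None then show ?thesis using vq i by (simp add: proper3_pre_def proper3_lead_def)
  next
    case (Some m)
    then have "2 * (m - 1) + 3 = 2 * m + 1" using assms i by (simp add: proper_idx3_def)
    then have "lead_monom (newton3 (2 * m + 1) :: 'a mpoly) (single 1 (m - 1) + single 2 1)"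
      using lead_monom_newton3[of "m - 1", where 'a='a] by (simp only:)
    from lead_monom_mult[OF vq this] show ?thesis
      using i Some by (simp add: proper3_pre_def proper3_lead_def)
  qed
qed

lemma proper3_in_subalg: "proper3 i \<in> subalg (range (\<lambda>k. psum 3 (2 * k + 1)))"
proof -
  have g: "psum 3 (2 * m + 1) \<in> subalg (range (\<lambda>k. psum 3 (2 * k + 1)))" for m
    by (rule subalg.gen) simp
  from g[of 0] g[of 1] show ?thesis
    by (cases i) (auto simp: proper3_def split: option.splits
        intro!: subalg.mult subalg_power g subalg.const[of 1, simplified])
qed

lemma keys_proper3_pre: "keys (proper3_pre i :: 'a::field_char_0 mpoly) \<subseteq> T3_support"
proof -
  have "proper3 i \<in> (T 3 :: 'a mpoly set)" using subalg_odd_psums_in_T[OF proper3_in_subalg] by simp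
  then show ?thesis using keys_T3_support[OF in_vars_proper3_pre] by (simp add: msubst_proper3_pre)
qed

lemma proper3_lead_in_support: "proper3_lead i \<in> T3_support"
proof -
  obtain c1 c3 e where i: "i = (c1, c3, e)" by (cases i) auto
  have "keys (proper3_lead i) \<subseteq> {..<3}"
    by (auto simp: i in_keys_iff lookup_proper3_lead split: if_splits)
  then show ?thesis by (cases e) (simp_all add: i T3_support_def lookup_proper3_lead)
qed

lemma inj_on_proper3_lead: "inj_on proper3_lead proper_idx3"
proof (rule inj_onI)
  fix i j assume i: "i \<in> proper_idx3" and j: "j \<in> proper_idx3" and e: "proper3_lead i = proper3_lead j"
  obtain a1 a3 e1 b1 b3 e2 where ij: "i = (a1, a3, e1)" "j = (b1, b3, e2)" by (cases i, cases j) auto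
  have "lookup (proper3_lead i) k = lookup (proper3_lead j) k" for k using e by simp
  from this[of 0] this[of 1] this[of 2] show "i = j"
    using i j unfolding ij by (cases e1; cases e2) (auto simp: proper_idx3_def lookup_proper3_lead)
qed

lemma proper3_lead_onto: "\<mu> \<in> T3_support \<Longrightarrow> \<exists>i\<in>proper_idx3. proper3_lead i = \<mu>"
proof -
  assume "\<mu> \<in> T3_support"
  then have kv: "keys \<mu> \<subseteq> {..<3}" and z: "lookup \<mu> 2 = 0 \<longrightarrow> lookup \<mu> 1 = 0"
    by (auto simp: T3_support_def)
  define i where "i = (if lookup \<mu> 1 = 0 then (lookup \<mu> 0, lookup \<mu> 2, None)
    else (lookup \<mu> 0, lookup \<mu> 2 - 1, Some (lookup \<mu> 1 + 1)))"
  have "i \<in> proper_idx3" by (simp add: i_def proper_idx3_def)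
  moreover have "proper3_lead i = \<mu>"
  proof (rule monom3_eqI)
    show "keys (proper3_lead i) \<subseteq> {..<3}"
      by (auto simp: i_def in_keys_iff lookup_proper3_lead split: if_splits)
    show "lookup (proper3_lead i) 0 = lookup \<mu> 0" "lookup (proper3_lead i) 1 = lookup \<mu> 1"
      "lookup (proper3_lead i) 2 = lookup \<mu> 2"
      using z by (auto simp: i_def lookup_proper3_lead)
  qed (rule kv)
  ultimately show ?thesis by blast
qed

theorem is_basis_T3: "is_basis proper_idx3 (proper3 :: _ \<Rightarrow> 'a::field_char_0 mpoly) (T 3)"
proof (rule is_basis_transfer[where E = "msubst gens3" and B = proper3_pre and N = 3 and L = proper3_lead
      and Piv = T3_support])
  show "proper3 ` proper_idx3 \<subseteq> T 3"
    using subalg_odd_psums_in_T[OF proper3_in_subalg] by auto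
  show "inj_on weight T3_support"
    by (rule inj_on_subset[OF inj_on_weight]) (auto simp: T3_support_def)
qed (auto simp: alg_hom_msubst msubst_proper3_pre in_vars_proper3_pre T3_msubst_gens3 msubst_gens3_inj
    proper3_lead_onto keys_proper3_pre lead_monom_proper3_pre inj_on_proper3_lead proper3_lead_in_support)

lemma is_basis_subset_subalg:
  assumes "is_basis I b S" "\<And>i. b i \<in> subalg G"
  shows "S \<subseteq> subalg G"
proof
  fix p assume "p \<in> S"
  then obtain a where "p = (\<Sum>i\<in>{i. a i \<noteq> 0}. Const (a i) * b i)"
    using assms(1) unfolding is_basis_def by blast
  moreover have "(\<Sum>i\<in>{i. a i \<noteq> 0}. Const (a i) * b i) \<in> subalg G"
    by (intro subalg_sum subalg.mult subalg.const assms(2))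
  ultimately show "p \<in> subalg G" by simp
qed

theorem mainTheorem8:
  shows "(\<forall>n\<in>{2,3}. (T n :: 'a::field_char_0 mpoly set) = subalg (range (\<lambda>k. psum n (2*k+1))))
       \<and> is_basis proper_idx2 (proper2 :: _ \<Rightarrow> 'a mpoly) (T 2)
       \<and> is_basis proper_idx3 (proper3 :: _ \<Rightarrow> 'a mpoly) (T 3)"
proof (intro conjI ballI is_basis_T2 is_basis_T3)
  fix n :: nat assume n: "n \<in> {2,3}"
  have "(T n :: 'a mpoly set) \<subseteq> subalg (range (\<lambda>k. psum n (2*k+1)))"
    using n is_basis_subset_subalg[OF is_basis_T2 proper2_in_subalg]
      is_basis_subset_subalg[OF is_basis_T3 proper3_in_subalg] by auto
  moreover have "subalg (range (\<lambda>k. psum n (2*k+1))) \<subseteq> (T n :: 'a mpoly set)"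
    using subalg_odd_psums_in_T n by blast
  ultimately show "(T n :: 'a mpoly set) = subalg (range (\<lambda>k. psum n (2*k+1)))" by blast
qed

end
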